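(* Let $f$ be a pre-subgroup of $V$ and $G_f=\{x\in S: xe\in H_f\}$. Then $$G_f=\{L(\omega_{\xi,f})^*:\xi\in\mathcal H\}=\{x\in S: x\rho_f=\rho_fx\}=\{x\in S:\delta(x)(1\otimes L_f)=x\otimes L_f\},$$ and $G_f$ is a $*$-stable left coideal subalgebra of $S$, i.e. a unital $*$-subalgebra with $\delta(G_f)\subset S\otimes G_f$.
   Context: Let $\mathcal H$ be a finite-dimensional Hilbert space (inner products linear in the second variable) and $V$ a multiplicative unitary on $\mathcal H$ ($V_{12}V_{13}V_{23}=V_{23}V_{12}$) of multiplicity 1 (one-dimensional space of fixed vectors $\xi$, i.e. $V(\xi\otimes\eta)=\xi\otimes\eta$ for all $\eta$). Fix a unit fixed vector $e$. $\omega_{\xi,\eta}(T)=\langle\xi,T\eta\rangle$; $L(\omega)=(\omega\otimes\mathrm{id})(V)$, $\rho(\omega)=(\mathrm{id}\otimes\omega)(V)$; $S=\{L(\omega):\omega\in\mathcal L(\mathcal H)^*\}$; $\delta(x)=V(x\otimes1)V^*$ for $x\in S$ (so $\delta(S)\subset S\otimes S$). A pre-subgroup is $f\in\mathcal H$ with $\|f\|=1$, $\langle f,e\rangle>0$, $V(f\otimes f)=f\otimes f$; $L_f=L(\omega_{f,f})$, $\rho_f=\rho(\omega_{f,f})$; $H_f=\{\eta:V(\eta\otimes f)=\eta\otimes f\}$. *)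

theory Defs
  imports Complex_Main
begin

text \<open>Finite-dimensional Hilbert space H modelled as l2 of a finite index type 'i
  (vectors 'i => complex, standard inner product, conjugate-linear in the first
  variable).\<close>

type_synonym 'i vec = "'i \<Rightarrow> complex"
type_synonym 'i op = "'i \<Rightarrow> 'i \<Rightarrow> complex"

definition inner_v :: "'i::finite vec \<Rightarrow> 'i vec \<Rightarrow> complex" where
  "inner_v x y = (\<Sum>i\<in>UNIV. cnj (x i) * y i)"

definition app :: "'i::finite op \<Rightarrow> 'i vec \<Rightarrow> 'i vec" where
  "app A x = (\<lambda>i. \<Sum>j\<in>UNIV. A i j * x j)"

definition comp_op :: "'i::finite op \<Rightarrow> 'i op \<Rightarrow> 'i op" where
  "comp_op A B = (\<lambda>i k. \<Sum>j\<in>UNIV. A i j * B j k)"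

definition adj :: "'i op \<Rightarrow> 'i op" where
  "adj A = (\<lambda>i j. cnj (A j i))"

definition id_op :: "'i op" where
  "id_op = (\<lambda>i j. if i = j then 1 else 0)"

definition unitary_op :: "'i::finite op \<Rightarrow> bool" where
  "unitary_op U \<longleftrightarrow> comp_op (adj U) U = id_op \<and> comp_op U (adj U) = id_op"

definition tensor_v :: "'i vec \<Rightarrow> 'j vec \<Rightarrow> ('i \<times> 'j) vec" where
  "tensor_v x y = (\<lambda>(i, j). x i * y j)"

definition tensor_op :: "'i op \<Rightarrow> 'j op \<Rightarrow> ('i \<times> 'j) op" where
  "tensor_op A B = (\<lambda>(i, j) (k, l). A i k * B j l)"

definition leg12 :: "('i \<times> 'i) op \<Rightarrow> ('i \<times> 'i \<times> 'i) op" where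
  "leg12 V = (\<lambda>(i, j, k) (i', j', k'). V (i, j) (i', j') * (if k = k' then 1 else 0))"

definition leg13 :: "('i \<times> 'i) op \<Rightarrow> ('i \<times> 'i \<times> 'i) op" where
  "leg13 V = (\<lambda>(i, j, k) (i', j', k'). V (i, k) (i', k') * (if j = j' then 1 else 0))"

definition leg23 :: "('i \<times> 'i) op \<Rightarrow> ('i \<times> 'i \<times> 'i) op" where
  "leg23 V = (\<lambda>(i, j, k) (i', j', k'). (if i = i' then 1 else 0) * V (j, k) (j', k'))"

definition multiplicative_unitary :: "('i::finite \<times> 'i) op \<Rightarrow> bool" where
  "multiplicative_unitary V \<longleftrightarrow> unitary_op V \<and>
     comp_op (comp_op (leg12 V) (leg13 V)) (leg23 V) = comp_op (leg23 V) (leg12 V)"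

definition lin_functional :: "('i op \<Rightarrow> complex) \<Rightarrow> bool" where
  "lin_functional \<omega> \<longleftrightarrow>
     (\<forall>A B. \<omega> (\<lambda>i j. A i j + B i j) = \<omega> A + \<omega> B) \<and>
     (\<forall>c A. \<omega> (\<lambda>i j. c * A i j) = c * \<omega> A)"

definition omega :: "'i::finite vec \<Rightarrow> 'i vec \<Rightarrow> 'i op \<Rightarrow> complex" where
  "omega \<xi> \<eta> T = inner_v \<xi> (app T \<eta>)"

text \<open>Slice maps: L(w) = (w (x) id)(V), rho(w) = (id (x) w)(V).\<close>
definition Lmap :: "('i \<times> 'i) op \<Rightarrow> ('i op \<Rightarrow> complex) \<Rightarrow> 'i op" where
  "Lmap V \<omega> = (\<lambda>j l. \<omega> (\<lambda>i k. V (i, j) (k, l)))"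

definition rhomap :: "('i \<times> 'i) op \<Rightarrow> ('i op \<Rightarrow> complex) \<Rightarrow> 'i op" where
  "rhomap V \<omega> = (\<lambda>i k. \<omega> (\<lambda>j l. V (i, j) (k, l)))"

definition Salg :: "('i \<times> 'i) op \<Rightarrow> 'i op set" where
  "Salg V = {Lmap V \<omega> | \<omega>. lin_functional \<omega>}"

definition delta :: "('i::finite \<times> 'i) op \<Rightarrow> 'i op \<Rightarrow> ('i \<times> 'i) op" where
  "delta V x = comp_op (comp_op V (tensor_op x id_op)) (adj V)"

definition fixed_vec :: "('i::finite \<times> 'i) op \<Rightarrow> 'i vec \<Rightarrow> bool" where
  "fixed_vec V \<xi> \<longleftrightarrow> (\<forall>\<eta>. app V (tensor_v \<xi> \<eta>) = tensor_v \<xi> \<eta>)"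

definition pre_subgroup :: "('i::finite \<times> 'i) op \<Rightarrow> 'i vec \<Rightarrow> 'i vec \<Rightarrow> bool" where
  "pre_subgroup V e f \<longleftrightarrow> inner_v f f = 1 \<and> inner_v f e \<in> \<real> \<and> Re (inner_v f e) > 0 \<and>
     app V (tensor_v f f) = tensor_v f f"

definition L_f :: "('i::finite \<times> 'i) op \<Rightarrow> 'i vec \<Rightarrow> 'i op" where
  "L_f V f = Lmap V (omega f f)"

definition rho_f :: "('i::finite \<times> 'i) op \<Rightarrow> 'i vec \<Rightarrow> 'i op" where
  "rho_f V f = rhomap V (omega f f)"

definition H_f :: "('i::finite \<times> 'i) op \<Rightarrow> 'i vec \<Rightarrow> 'i vec set" where
  "H_f V f = {\<eta>. app V (tensor_v \<eta> f) = tensor_v \<eta> f}"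

definition G_f :: "('i::finite \<times> 'i) op \<Rightarrow> 'i vec \<Rightarrow> 'i vec \<Rightarrow> 'i op set" where
  "G_f V e f = {x \<in> Salg V. app x e \<in> H_f V f}"

definition alg_tensor :: "'i op set \<Rightarrow> 'j op set \<Rightarrow> ('i \<times> 'j) op set" where
  "alg_tensor A B = {T. \<exists>(n::nat) c a b. (\<forall>k<n. a k \<in> A \<and> b k \<in> B) \<and>
      T = (\<lambda>p q. \<Sum>k<n. c k * tensor_op (a k) (b k) p q)}"

definition star_subalgebra :: "'i::finite op set \<Rightarrow> bool" where
  "star_subalgebra G \<longleftrightarrow> id_op \<in> G \<and>
     (\<forall>x\<in>G. \<forall>y\<in>G. (\<lambda>i j. x i j + y i j) \<in> G) \<and>
     (\<forall>c. \<forall>x\<in>G. (\<lambda>i j. c * x i j) \<in> G) \<and>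
     (\<forall>x\<in>G. \<forall>y\<in>G. comp_op x y \<in> G) \<and>
     (\<forall>x\<in>G. adj x \<in> G)"

end

theory Submission
  imports Defs
begin

text \<open>
  In finite dimensions the slice \<open>T = (Tr \<otimes> id)(V)\<close> satisfies \<open>T\<^sup>2 = (dim H) T\<close>, so every vector in
  its range is fixed on the right by \<open>V\<close>; multiplicity one makes \<open>\<rho>\<^sub>e\<close> the projection onto \<open>\<complex> e\<close>,
  whence \<open>\<langle>e, T e\<rangle> = Tr \<rho>\<^sub>e = 1\<close>. With \<open>c = T e\<close> the pentagon equation gives the reconstruction
  \<open>x = L(\<omega>\<^bsub>c, x e\<^esub>)\<close> for every \<open>x \<in> S\<close>, and it shows that products and adjoints of slices
  \<open>L(\<omega>\<^bsub>a, b\<^esub>)\<close> are again slices and that \<open>L(\<omega>\<^bsub>a, b\<^esub>)\<close> maps \<open>H\<^sub>f\<close> into itself when \<open>b \<in> H\<^sub>f\<close>.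
  Hence \<open>G\<^sub>f\<close> consists of the \<open>L(\<omega>\<^bsub>\<xi>, f\<^esub>)\<close> and is closed under adjoints; as \<open>\<rho>\<^sub>f\<close> is the
  orthogonal projection onto \<open>H\<^sub>f\<close>, \<open>G\<^sub>f\<close> is the part of \<open>S\<close> commuting with \<open>\<rho>\<^sub>f\<close>. Finally
  \<open>\<delta>(L(\<omega>\<^bsub>c, \<eta>\<^esub>)) = \<Sum>\<^sub>m L(\<omega>\<^bsub>c, e\<^sub>m\<^esub>) \<otimes> L(\<omega>\<^bsub>e\<^sub>m, \<eta>\<^esub>)\<close>, whose right legs lie in \<open>G\<^sub>f\<close>
  when \<open>\<eta> \<in> H\<^sub>f\<close>, and \<open>\<delta>(x)\<close> acts as \<open>x \<otimes> 1\<close> on \<open>H \<otimes> L\<^sub>f H\<close> exactly when \<open>x e \<in> H\<^sub>f\<close>.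
\<close>

lemma if_one_mult [simp]: "(if P then (1::complex) else 0) * a = (if P then a else 0)"
  by simp

lemma mult_if_one [simp]: "a * (if P then (1::complex) else 0) = (if P then a else 0)"
  by simp

lemma if_zero_mult [simp]: "(if P then a else (0::complex)) * b = (if P then a * b else 0)"
  by simp

lemma mult_if_zero [simp]: "b * (if P then a else (0::complex)) = (if P then b * a else 0)"
  by simp

lemma sum_if_zero [simp]: "(\<Sum>x\<in>A. if P then f x else (0::complex)) = (if P then (\<Sum>x\<in>A. f x) else 0)"
  by simp

definition basis_vec :: "'i \<Rightarrow> 'i vec" where
  "basis_vec i = (\<lambda>j. if j = i then 1 else 0)"

lemma app_basis_vec: "app A (basis_vec k) = (\<lambda>i. A i k)"
  by (simp add: app_def basis_vec_def)

lemma inner_basis_vec_left: "inner_v (basis_vec i) x = x i"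
  by (simp add: inner_v_def basis_vec_def if_distrib[of cnj] cong: if_cong)

lemma inner_basis_vec_right: "inner_v x (basis_vec i) = cnj (x i)"
  by (simp add: inner_v_def basis_vec_def)

lemma inner_basis_vec_self: "inner_v (basis_vec i) (basis_vec i) = 1"
  unfolding inner_basis_vec_left by (simp add: basis_vec_def)

lemma vec_basis_expansion: "(w::'i::finite vec) = (\<lambda>x. \<Sum>q\<in>UNIV. w q * basis_vec q x)"
  by (rule ext) (simp add: basis_vec_def)

lemma vec_eqI: "(\<And>a. inner_v a x = inner_v a y) \<Longrightarrow> x = y"
proof
  fix i assume "\<And>a. inner_v a x = inner_v a y"
  from this[of "basis_vec i"] show "x i = y i" by (simp add: inner_basis_vec_left)
qed

lemma op_eqI: "(\<And>x. app A x = app B x) \<Longrightarrow> A = B"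
proof (intro ext)
  fix i k assume "\<And>x. app A x = app B x"
  from fun_cong[OF this[of "basis_vec k"], of i] show "A i k = B i k"
    by (simp add: app_basis_vec)
qed

lemma app_comp_op: "app (comp_op A B) x = app A (app B x)"
  unfolding app_def comp_op_def
  by (rule ext) (simp add: sum_distrib_left sum_distrib_right mult.assoc, rule sum.swap)

lemma comp_op_assoc: "comp_op (comp_op A B) C = comp_op A (comp_op B C)"
  unfolding comp_op_def
  by (intro ext) (simp add: sum_distrib_left sum_distrib_right mult.assoc, rule sum.swap)

lemma adj_adj [simp]: "adj (adj A) = A"
  by (simp add: adj_def)

lemma inner_adj_right: "inner_v x (app A y) = inner_v (app (adj A) x) y"
  unfolding inner_v_def app_def adj_def
  by (simp add: sum_distrib_left sum_distrib_right mult_ac, rule sum.swap)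

lemma inner_adj_left: "inner_v (app A x) y = inner_v x (app (adj A) y)"
  by (metis inner_adj_right adj_adj)

lemma adj_comp_op: "adj (comp_op A B) = comp_op (adj B) (adj A)"
  unfolding adj_def comp_op_def by (simp add: mult.commute)

lemma app_id_op [simp]: "app id_op x = x"
  by (simp add: app_def id_op_def)

lemma app_add: "app A (\<lambda>i. x i + y i) = (\<lambda>i. app A x i + app A y i)"
  by (simp add: app_def distrib_left sum.distrib)

lemma app_scale: "app A (\<lambda>i. c * x i) = (\<lambda>i. c * app A x i)"
  by (simp add: app_def sum_distrib_left mult.left_commute)

lemma app_lincomb: "app A (\<lambda>x. \<Sum>q\<in>Q. c q * g q x) = (\<lambda>x. \<Sum>q\<in>Q. c q * app A (g q) x)"
  unfolding app_def by (rule ext) (simp add: sum_distrib_left mult_ac, rule sum.swap)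

lemma app_sum: "app A (\<lambda>x. \<Sum>q\<in>Q. g q x) = (\<lambda>x. \<Sum>q\<in>Q. app A (g q) x)"
  unfolding app_def by (rule ext) (simp add: sum_distrib_left, rule sum.swap)

lemma app_op_add: "app (\<lambda>i j. A i j + B i j) x = (\<lambda>i. app A x i + app B x i)"
  by (simp add: app_def distrib_right sum.distrib)

lemma app_op_scale: "app (\<lambda>i j. c * A i j) x = (\<lambda>i. c * app A x i)"
  by (simp add: app_def sum_distrib_left mult.assoc)

lemma app_op_sum: "app (\<lambda>j l. \<Sum>q\<in>Q. B q j l) x = (\<lambda>j. \<Sum>q\<in>Q. app (B q) x j)"
  unfolding app_def by (rule ext) (simp add: sum_distrib_right, rule sum.swap)

lemma inner_diff_left: "inner_v (\<lambda>i. y i - z i) x = inner_v y x - inner_v z x"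
  by (simp add: inner_v_def left_diff_distrib sum_subtractf)

lemma inner_diff_right: "inner_v x (\<lambda>i. y i - z i) = inner_v x y - inner_v x z"
  by (simp add: inner_v_def right_diff_distrib sum_subtractf)

lemma inner_add_right: "inner_v x (\<lambda>i. y i + z i) = inner_v x y + inner_v x z"
  by (simp add: inner_v_def distrib_left sum.distrib)

lemma inner_scale_right: "inner_v x (\<lambda>i. c * y i) = c * inner_v x y"
  by (simp add: inner_v_def sum_distrib_left mult.left_commute)

lemma inner_lincomb_right: "inner_v y (\<lambda>x. \<Sum>q\<in>Q. c q * g q x) = (\<Sum>q\<in>Q. c q * inner_v y (g q))"
  unfolding inner_v_def by (simp add: sum_distrib_left mult_ac, rule sum.swap)

lemma inner_lincomb_left: "inner_v (\<lambda>x. \<Sum>q\<in>Q. c q * g q x) y = (\<Sum>q\<in>Q. cnj (c q) * inner_v (g q) y)"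
  unfolding inner_v_def by (simp add: sum_distrib_left sum_distrib_right mult_ac, rule sum.swap)

lemma inner_sum_right: "inner_v y (\<lambda>x. \<Sum>q\<in>Q. g q x) = (\<Sum>q\<in>Q. inner_v y (g q))"
  unfolding inner_v_def by (simp add: sum_distrib_left, rule sum.swap)

lemma cnj_inner_v: "cnj (inner_v x y) = inner_v y x"
  by (simp add: inner_v_def mult.commute)

lemma inner_self_eq_norm_sum: "inner_v x x = of_real (\<Sum>i\<in>UNIV. (cmod (x i))\<^sup>2)"
proof -
  have "\<And>i. cnj (x i) * x i = of_real ((cmod (x i))\<^sup>2)"
    by (subst complex_norm_square) (simp add: mult.commute)
  then show ?thesis unfolding inner_v_def of_real_sum by simp
qed

lemma inner_self_eq_0: "inner_v x x = 0 \<Longrightarrow> x = (\<lambda>i. 0)"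
proof
  fix i assume "inner_v x x = 0"
  then have "(\<Sum>i\<in>UNIV. (cmod (x i))\<^sup>2) = 0" unfolding inner_self_eq_norm_sum of_real_eq_0_iff .
  then have "\<forall>i\<in>UNIV. (cmod (x i))\<^sup>2 = 0" by (subst (asm) sum_nonneg_eq_0_iff) auto
  then show "x i = 0" by simp
qed

lemma comp_op_commute_if_reducing:
  assumes P: "adj P = P"
    and x: "comp_op P (comp_op x P) = comp_op x P"
    and adj_x: "comp_op P (comp_op (adj x) P) = comp_op (adj x) P"
  shows "comp_op x P = comp_op P x"
proof -
  have "comp_op (comp_op P x) P = comp_op P x"
    using arg_cong[OF adj_x, of adj] by (simp add: adj_comp_op P comp_op_assoc)
  then show ?thesis
    using x by (simp add: comp_op_assoc)
qed

lemma unitary_adj_app: "unitary_op U \<Longrightarrow> app (adj U) (app U x) = x"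
  by (metis app_comp_op app_id_op unitary_op_def)

lemma unitary_app_adj: "unitary_op U \<Longrightarrow> app U (app (adj U) x) = x"
  by (metis app_comp_op app_id_op unitary_op_def)

lemma unitary_adj_fixes: "unitary_op U \<Longrightarrow> app U v = v \<Longrightarrow> app (adj U) v = v"
  using unitary_adj_app[of U v] by simp

text \<open>For unitary \<open>U\<close>, \<open>\<parallel>U v - v\<parallel>\<^sup>2 = 2 \<parallel>v\<parallel>\<^sup>2 - 2 Re \<langle>v, U v\<rangle>\<close>: equality in Cauchy--Schwarz forces
  \<open>U v = v\<close>.\<close>

lemma unitary_fixes_if_sum_inner_eq:
  assumes U: "unitary_op U" and fin: "finite I"
    and eq: "(\<Sum>i\<in>I. inner_v (v i) (app U (v i))) = (\<Sum>i\<in>I. inner_v (v i) (v i))"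
  shows "\<forall>i\<in>I. app U (v i) = v i"
proof -
  define d where "d i = inner_v (\<lambda>j. app U (v i) j - v i j) (\<lambda>j. app U (v i) j - v i j)" for i
  have d: "d i = 2 * inner_v (v i) (v i) - inner_v (v i) (app U (v i)) - cnj (inner_v (v i) (app U (v i)))" for i
    using inner_adj_left[of U "v i" "app U (v i)"]
    by (simp add: d_def inner_diff_left inner_diff_right cnj_inner_v unitary_adj_app[OF U])
  have "(\<Sum>i\<in>I. d i) = 2 * (\<Sum>i\<in>I. inner_v (v i) (v i)) - (\<Sum>i\<in>I. inner_v (v i) (app U (v i)))
      - cnj (\<Sum>i\<in>I. inner_v (v i) (app U (v i)))"
    by (simp add: d sum_subtractf sum_distrib_left)
  also have "\<dots> = 0"
    by (simp add: eq cnj_inner_v)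
  finally have sum_d: "(\<Sum>i\<in>I. d i) = 0" .
  have d_real: "d i = of_real (\<Sum>j\<in>UNIV. (cmod (app U (v i) j - v i j))\<^sup>2)" for i
    unfolding d_def by (rule inner_self_eq_norm_sum)
  then have "(\<Sum>i\<in>I. \<Sum>j\<in>UNIV. (cmod (app U (v i) j - v i j))\<^sup>2) = 0"
    using sum_d by (simp flip: of_real_sum)
  then have "\<forall>i\<in>I. d i = 0"
    using fin by (subst (asm) sum_nonneg_eq_0_iff) (auto simp: d_real sum_nonneg)
  then show ?thesis
    unfolding d_def by (auto dest!: inner_self_eq_0 simp: fun_eq_iff)
qed

lemma unitary_fixes_if_inner_eq:
  assumes "unitary_op U" "inner_v v (app U v) = inner_v v v"
  shows "app U v = v"
  using unitary_fixes_if_sum_inner_eq[of U "{()}" "\<lambda>_. v"] assms by simp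

section \<open>Tensor products and leg numbering\<close>

lemma sum_UNIV_prod: "(\<Sum>p\<in>UNIV. g p) = (\<Sum>a\<in>UNIV. \<Sum>b\<in>UNIV. g (a, b))"
  by (subst sum.cartesian_product) simp

lemma sum_UNIV_prod3:
  "(\<Sum>p\<in>UNIV. g p) = (\<Sum>a\<in>UNIV. \<Sum>b\<in>UNIV. \<Sum>c\<in>UNIV. g (a, b, c))"
  by (simp only: sum_UNIV_prod)

lemma sum_rotate3: "(\<Sum>a\<in>A. \<Sum>b\<in>B. \<Sum>c\<in>C. f a b c) = (\<Sum>b\<in>B. \<Sum>c\<in>C. \<Sum>a\<in>A. f a b c)"
  by (subst sum.swap) (simp add: sum.swap[of _ C])

lemma tensor_basis_vec: "tensor_v (basis_vec i) (basis_vec j) = basis_vec (i, j)"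
  by (auto simp: tensor_v_def basis_vec_def)

lemma app_tensor_op: "app (tensor_op A B) (tensor_v x y) = tensor_v (app A x) (app B y)"
  unfolding app_def tensor_op_def tensor_v_def
  by (rule ext) (auto simp: sum_UNIV_prod sum_distrib_left sum_distrib_right mult_ac, rule sum.swap)

lemma inner_tensor_v: "inner_v (tensor_v a b) (tensor_v c d) = inner_v a c * inner_v b d"
  unfolding inner_v_def tensor_v_def
  by (auto simp: sum_UNIV_prod sum_distrib_left sum_distrib_right mult_ac, rule sum.swap)

lemma op_eq_tensorI:
  fixes A B :: "('a::finite \<times> 'b::finite) op"
  assumes "\<And>a b. app A (tensor_v a b) = app B (tensor_v a b)"
  shows "A = B"
proof (intro ext)
  fix p q :: "'a \<times> 'b"
  from fun_cong[OF assms[of "basis_vec (fst q)" "basis_vec (snd q)"], of p] show "A p q = B p q"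
    by (simp add: tensor_basis_vec app_basis_vec)
qed

lemma vec_eq_tensorI:
  fixes x y :: "('a::finite \<times> 'b::finite) vec"
  assumes "\<And>a b. inner_v (tensor_v a b) x = inner_v (tensor_v a b) y"
  shows "x = y"
proof
  fix q :: "'a \<times> 'b"
  from assms[of "basis_vec (fst q)" "basis_vec (snd q)"] show "x q = y q"
    by (simp add: tensor_basis_vec inner_basis_vec_left)
qed

lemma tensor_v_add_left: "tensor_v (\<lambda>i. u i + v i) w = (\<lambda>p. tensor_v u w p + tensor_v v w p)"
  by (auto simp: tensor_v_def distrib_right)

lemma tensor_v_scale_left: "tensor_v (\<lambda>i. c * u i) w = (\<lambda>p. c * tensor_v u w p)"
  by (auto simp: tensor_v_def mult.assoc)

lemma tensor_v_lincomb_left: "tensor_v (\<lambda>x. \<Sum>q\<in>Q. c q * g q x) a = (\<lambda>x. \<Sum>q\<in>Q. c q * tensor_v (g q) a x)"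
  by (auto simp: tensor_v_def sum_distrib_right mult.assoc)

lemma sum_tensor_op_in_alg_tensor:
  fixes a :: "'m::finite \<Rightarrow> 'i op" and b :: "'m \<Rightarrow> 'j op"
  assumes "\<And>m. a m \<in> A" "\<And>m. b m \<in> B"
  shows "(\<lambda>p q. \<Sum>m\<in>UNIV. tensor_op (a m) (b m) p q) \<in> alg_tensor A B"
proof -
  obtain xs where xs: "set xs = (UNIV :: 'm set)" "distinct xs"
    using finite_distinct_list[OF finite_UNIV] by blast
  have "(\<Sum>m\<in>UNIV. g m) = (\<Sum>k<length xs. g (xs ! k))" for g :: "'m \<Rightarrow> complex"
    using sum.reindex_bij_betw[OF bij_betw_nth[OF xs(2) refl xs(1)[symmetric]], of g] by simp
  then show ?thesis
    unfolding alg_tensor_def using assms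
    by (intro CollectI exI[of _ "length xs"] exI[of _ "\<lambda>_. 1"] exI[of _ "\<lambda>k. a (xs ! k)"]
        exI[of _ "\<lambda>k. b (xs ! k)"]) auto
qed

definition tensor12 :: "('i \<times> 'i) vec \<Rightarrow> 'i vec \<Rightarrow> ('i \<times> 'i \<times> 'i) vec" where
  "tensor12 w z = (\<lambda>(i, j, k). w (i, j) * z k)"

definition tensor13 :: "('i \<times> 'i) vec \<Rightarrow> 'i vec \<Rightarrow> ('i \<times> 'i \<times> 'i) vec" where
  "tensor13 w y = (\<lambda>(i, j, k). w (i, k) * y j)"

lemma tensor_v_eq_tensor12: "tensor_v x (tensor_v y z) = tensor12 (tensor_v x y) z"
  by (auto simp: tensor12_def tensor_v_def)

lemma tensor_v_eq_tensor13: "tensor_v x (tensor_v y z) = tensor13 (tensor_v x z) y"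
  by (auto simp: tensor13_def tensor_v_def)

lemma tensor12_lincomb_left: "tensor12 (\<lambda>x. \<Sum>q\<in>Q. c q * g q x) a = (\<lambda>x. \<Sum>q\<in>Q. c q * tensor12 (g q) a x)"
  by (auto simp: tensor12_def sum_distrib_right mult.assoc)

lemma tensor13_lincomb_left: "tensor13 (\<lambda>x. \<Sum>q\<in>Q. c q * g q x) a = (\<lambda>x. \<Sum>q\<in>Q. c q * tensor13 (g q) a x)"
  by (auto simp: tensor13_def sum_distrib_right mult.assoc)

lemma tensor13_basis_vec:
  "tensor13 (basis_vec q) c = tensor12 (tensor_v (basis_vec (fst q)) c) (basis_vec (snd q))"
  by (metis prod.collapse tensor_basis_vec tensor_v_eq_tensor12 tensor_v_eq_tensor13)

lemma tensor13_cancel_right: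
  assumes "tensor13 W m = tensor13 W' m" "m \<noteq> (\<lambda>i. 0)"
  shows "W = W'"
proof
  fix p :: "'a \<times> 'a"
  obtain j where j: "m j \<noteq> 0" using assms(2) by auto
  from fun_cong[OF assms(1), of "(fst p, j, snd p)"] have "W p * m j = W' p * m j"
    by (simp add: tensor13_def)
  then show "W p = W' p" using j by simp
qed

lemma app_leg12_tensor12: "app (leg12 A) (tensor12 w z) = tensor12 (app A w) z"
  unfolding app_def leg12_def tensor12_def
  by (rule ext) (auto simp: sum_UNIV_prod3 sum_UNIV_prod sum_distrib_right mult.assoc)

lemma app_leg13_tensor13: "app (leg13 A) (tensor13 w y) = tensor13 (app A w) y"
  unfolding app_def leg13_def tensor13_def
  by (rule ext) (auto simp: sum_UNIV_prod3 sum_UNIV_prod sum_distrib_right mult.assoc)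

lemma app_leg23_tensor_v: "app (leg23 A) (tensor_v x w) = tensor_v x (app A w)"
  unfolding app_def leg23_def tensor_v_def
  by (rule ext) (auto simp: sum_UNIV_prod3 sum_UNIV_prod sum_distrib_left mult.left_commute)

lemma inner_tensor12: "inner_v (tensor12 w z) (tensor12 w' z') = inner_v w w' * inner_v z z'"
  unfolding inner_v_def tensor12_def
  by (simp add: sum_UNIV_prod3 sum_UNIV_prod sum_distrib_left sum_distrib_right mult_ac)

lemma inner_tensor13: "inner_v (tensor13 w y) (tensor13 w' y') = inner_v w w' * inner_v y y'"
  unfolding inner_v_def tensor13_def
  by (simp add: sum_UNIV_prod3 sum_UNIV_prod sum_distrib_left sum_distrib_right mult_ac)
    (rule sum.cong[OF refl], rule sum.swap)

lemma adj_leg12: "adj (leg12 A) = leg12 (adj A)"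
  by (auto simp: adj_def leg12_def intro!: ext)

lemma adj_leg13: "adj (leg13 A) = leg13 (adj A)"
  by (auto simp: adj_def leg13_def intro!: ext)

lemma adj_leg23: "adj (leg23 A) = leg23 (adj A)"
  by (auto simp: adj_def leg23_def intro!: ext)

lemma comp_leg12: "comp_op (leg12 A) (leg12 B) = leg12 (comp_op A B)"
  unfolding comp_op_def leg12_def
  by (auto simp: sum_UNIV_prod3 sum_UNIV_prod sum_distrib_right intro!: ext)

lemma comp_leg13: "comp_op (leg13 A) (leg13 B) = leg13 (comp_op A B)"
  unfolding comp_op_def leg13_def
  by (auto simp: sum_UNIV_prod3 sum_UNIV_prod sum_distrib_right intro!: ext)

lemma comp_leg23: "comp_op (leg23 A) (leg23 B) = leg23 (comp_op A B)"
  unfolding comp_op_def leg23_def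
  by (auto simp: sum_UNIV_prod3 sum_UNIV_prod sum_distrib_left intro!: ext)

lemma leg12_id_op: "leg12 id_op = id_op"
  by (auto simp: leg12_def id_op_def intro!: ext)

lemma leg13_id_op: "leg13 id_op = id_op"
  by (auto simp: leg13_def id_op_def intro!: ext)

lemma leg23_id_op: "leg23 id_op = id_op"
  by (auto simp: leg23_def id_op_def intro!: ext)

lemma unitary_leg12: "unitary_op V \<Longrightarrow> unitary_op (leg12 V)"
  by (simp add: unitary_op_def adj_leg12 comp_leg12 leg12_id_op)

lemma unitary_leg13: "unitary_op V \<Longrightarrow> unitary_op (leg13 V)"
  by (simp add: unitary_op_def adj_leg13 comp_leg13 leg13_id_op)

lemma unitary_leg23: "unitary_op V \<Longrightarrow> unitary_op (leg23 V)"
  by (simp add: unitary_op_def adj_leg23 comp_leg23 leg23_id_op)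

lemma inner_leg12_right: "inner_v x (app (leg12 W) y) = inner_v (app (leg12 (adj W)) x) y"
  by (simp add: inner_adj_right adj_leg12)

lemma inner_leg12_adj_right: "inner_v x (app (leg12 (adj W)) y) = inner_v (app (leg12 W) x) y"
  by (simp add: inner_adj_right adj_leg12)

lemma inner_leg13_right: "inner_v x (app (leg13 W) y) = inner_v (app (leg13 (adj W)) x) y"
  by (simp add: inner_adj_right adj_leg13)

lemma inner_leg13_adj_right: "inner_v x (app (leg13 (adj W)) y) = inner_v (app (leg13 W) x) y"
  by (simp add: inner_adj_right adj_leg13)

lemma inner_leg23_right: "inner_v x (app (leg23 W) y) = inner_v (app (leg23 (adj W)) x) y"
  by (simp add: inner_adj_right adj_leg23)

lemma leg12_fixes_tensor13:
  assumes "\<And>x. app W (tensor_v x c) = tensor_v x c"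
  shows "app (leg12 W) (tensor13 U c) = tensor13 U c"
proof -
  have U: "tensor13 U c = (\<lambda>x. \<Sum>q\<in>UNIV. U q * tensor12 (tensor_v (basis_vec (fst q)) c) (basis_vec (snd q)) x)"
    by (subst vec_basis_expansion[of U]) (simp add: tensor13_lincomb_left tensor13_basis_vec)
  show ?thesis by (subst (1 2) U) (simp add: app_lincomb app_leg12_tensor12 assms)
qed

text \<open>The partial trace over the first leg does not depend on the orthonormal basis.\<close>

lemma sum_tensor12_unitary_basis:
  assumes U: "unitary_op U"
  shows "(\<Sum>p\<in>UNIV. inner_v (tensor12 (app U (basis_vec p)) a) (app X (tensor12 (app U (basis_vec p)) b)))
       = (\<Sum>p\<in>UNIV. inner_v (tensor12 (basis_vec p) a) (app X (tensor12 (basis_vec p) b)))"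
proof -
  define K where "K q q' = inner_v (tensor12 (basis_vec q) a) (app X (tensor12 (basis_vec q') b))" for q q'
  have col: "app U (basis_vec p) = (\<lambda>x. \<Sum>q\<in>UNIV. U q p * basis_vec q x)" for p
    by (subst vec_basis_expansion) (simp add: app_basis_vec)
  have "inner_v (tensor12 (app U (basis_vec p)) a) (app X (tensor12 (app U (basis_vec p)) b))
      = (\<Sum>q\<in>UNIV. \<Sum>q'\<in>UNIV. cnj (U q p) * (U q' p * K q q'))" for p
    unfolding col tensor12_lincomb_left app_lincomb inner_lincomb_left inner_lincomb_right K_def
    by (simp add: sum_distrib_left)
  then have "(\<Sum>p\<in>UNIV. inner_v (tensor12 (app U (basis_vec p)) a) (app X (tensor12 (app U (basis_vec p)) b)))
      = (\<Sum>p\<in>UNIV. \<Sum>q\<in>UNIV. \<Sum>q'\<in>UNIV. cnj (U q p) * (U q' p * K q q'))"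
    by simp
  also have "\<dots> = (\<Sum>q\<in>UNIV. \<Sum>q'\<in>UNIV. \<Sum>p\<in>UNIV. cnj (U q p) * (U q' p * K q q'))"
    by (rule sum_rotate3)
  also have "\<dots> = (\<Sum>q\<in>UNIV. \<Sum>q'\<in>UNIV. comp_op U (adj U) q' q * K q q')"
    by (simp add: comp_op_def adj_def sum_distrib_right sum_distrib_left mult_ac)
  also have "\<dots> = (\<Sum>q\<in>UNIV. K q q)"
    using U by (simp add: unitary_op_def id_op_def)
  finally show ?thesis unfolding K_def .
qed

text \<open>\<open>slice_fst a U = (\<omega>\<^sub>a \<otimes> id) U\<close> and \<open>slice_snd a U = (id \<otimes> \<omega>\<^sub>a) U\<close>, the partial inner products
  with \<open>a\<close> in the first resp.\ second tensor factor.\<close>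

definition slice_fst :: "'a vec \<Rightarrow> ('a \<times> 'b) vec \<Rightarrow> 'b vec" where
  "slice_fst a U = (\<lambda>j. \<Sum>i\<in>UNIV. cnj (a i) * U (i, j))"

definition slice_snd :: "'b vec \<Rightarrow> ('a \<times> 'b) vec \<Rightarrow> 'a vec" where
  "slice_snd a U = (\<lambda>i. \<Sum>j\<in>UNIV. cnj (a j) * U (i, j))"

lemma inner_slice_fst: "inner_v x (slice_fst a U) = inner_v (tensor_v a x) U"
  unfolding inner_v_def slice_fst_def tensor_v_def
  by (simp add: sum_UNIV_prod sum_distrib_left mult_ac, rule sum.swap)

lemma inner_slice_snd: "inner_v x (slice_snd a U) = inner_v (tensor_v x a) U"
  unfolding inner_v_def slice_snd_def tensor_v_def
  by (simp add: sum_UNIV_prod sum_distrib_left mult_ac)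

lemma slice_fst_tensor_v: "slice_fst a (tensor_v x y) = (\<lambda>j. inner_v a x * y j)"
  by (auto simp: slice_fst_def tensor_v_def inner_v_def sum_distrib_left sum_distrib_right mult_ac)

lemma slice_snd_tensor_v: "slice_snd a (tensor_v x y) = (\<lambda>i. x i * inner_v a y)"
  by (auto simp: slice_snd_def tensor_v_def inner_v_def sum_distrib_left mult_ac)

lemma slice_fst_tensor12: "slice_fst a (tensor12 W f) = tensor_v (slice_fst a W) f"
  by (auto simp: slice_fst_def tensor12_def tensor_v_def sum_distrib_right mult.assoc)

lemma slice_fst_lincomb: "slice_fst a (\<lambda>p. \<Sum>q\<in>Q. c q * g q p) = (\<lambda>j. \<Sum>q\<in>Q. c q * slice_fst a (g q) j)"
  unfolding slice_fst_def by (rule ext) (simp add: sum_distrib_left mult_ac, rule sum.swap)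

lemma inner_tensor12_tensor13: "inner_v (tensor12 U z) (tensor13 W y) = inner_v (slice_snd y U) (slice_snd z W)"
  unfolding inner_v_def tensor12_def tensor13_def slice_snd_def
  by (simp add: sum_UNIV_prod3 sum_distrib_left sum_distrib_right mult_ac)
    (rule sum.cong[OF refl], rule trans[OF sum.swap], simp add: mult_ac)

lemma inner_tensor13_tensor_v: "inner_v (tensor13 U y) (tensor_v x W) = inner_v (slice_fst x U) (slice_fst y W)"
proof -
  have "inner_v (tensor13 U y) (tensor_v x W)
      = (\<Sum>a\<in>UNIV. \<Sum>b\<in>UNIV. \<Sum>c\<in>UNIV. cnj (U (a, c) * y b) * (x a * W (b, c)))"
    unfolding inner_v_def tensor13_def tensor_v_def by (simp add: sum_UNIV_prod3)
  also have "\<dots> = (\<Sum>b\<in>UNIV. \<Sum>c\<in>UNIV. \<Sum>a\<in>UNIV. cnj (U (a, c) * y b) * (x a * W (b, c)))"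
    by (rule sum_rotate3)
  also have "\<dots> = (\<Sum>c\<in>UNIV. \<Sum>a\<in>UNIV. \<Sum>b\<in>UNIV. cnj (U (a, c) * y b) * (x a * W (b, c)))"
    by (rule sum_rotate3)
  also have "\<dots> = (\<Sum>c\<in>UNIV. \<Sum>b\<in>UNIV. \<Sum>a\<in>UNIV. cnj (U (a, c) * y b) * (x a * W (b, c)))"
    by (rule sum.cong[OF refl], rule sum.swap)
  also have "\<dots> = inner_v (slice_fst x U) (slice_fst y W)"
    unfolding inner_v_def slice_fst_def by (simp add: sum_distrib_left sum_distrib_right mult_ac)
  finally show ?thesis .
qed

lemma inner_tensor12_tensor_v: "inner_v (tensor12 U a) (tensor_v b W) = inner_v (tensor_v (slice_fst b U) a) W"
  unfolding inner_v_def tensor12_def tensor_v_def slice_fst_def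
  by (simp add: sum_UNIV_prod3 sum_UNIV_prod sum_distrib_left sum_distrib_right mult_ac)
    (rule trans[OF sum_rotate3], simp add: mult_ac)

lemma app_tensor_slice_fst: "app M (tensor_v (slice_fst a W) b) = slice_fst a (app (leg23 M) (tensor12 W b))"
  unfolding app_def slice_fst_def leg23_def tensor12_def tensor_v_def
  by (rule ext) (clarsimp simp: sum_UNIV_prod3 sum_UNIV_prod sum_distrib_left sum_distrib_right mult_ac,
      rule sym, rule trans[OF sum_rotate3], simp add: mult_ac)

lemma app_Lmap_omega: "app (Lmap V (omega a b)) x = slice_fst a (app V (tensor_v b x))"
  unfolding app_def Lmap_def omega_def inner_v_def slice_fst_def tensor_v_def
  by (rule ext) (simp add: sum_UNIV_prod sum_distrib_left sum_distrib_right mult_ac, rule sum_rotate3)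

lemma app_rhomap_omega: "app (rhomap V (omega a b)) x = slice_snd a (app V (tensor_v x b))"
  unfolding app_def rhomap_def omega_def inner_v_def slice_snd_def tensor_v_def
  by (rule ext) (simp add: sum_UNIV_prod sum_distrib_left sum_distrib_right mult_ac, rule sum.swap)

lemma inner_Lmap_omega:
  "inner_v y (app (Lmap V (omega a b)) x) = inner_v (tensor_v a y) (app V (tensor_v b x))"
  by (simp add: app_Lmap_omega inner_slice_fst)

lemma inner_rhomap_omega:
  "inner_v y (app (rhomap V (omega a b)) x) = inner_v (tensor_v y a) (app V (tensor_v x b))"
  by (simp add: app_rhomap_omega inner_slice_snd)

lemma app_adj_Lmap_omega: "app (adj (Lmap V (omega a b))) y = slice_fst b (app (adj V) (tensor_v a y))"
  (is "?lhs = ?rhs")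
proof (rule vec_eqI)
  fix x
  have "inner_v x (app (adj (Lmap V (omega a b))) y) = cnj (inner_v y (app (Lmap V (omega a b)) x))"
    by (simp add: inner_adj_left[symmetric] cnj_inner_v)
  also have "\<dots> = cnj (inner_v (tensor_v a y) (app V (tensor_v b x)))"
    by (simp add: inner_Lmap_omega)
  also have "\<dots> = inner_v (tensor_v b x) (app (adj V) (tensor_v a y))"
    by (simp add: cnj_inner_v inner_adj_left)
  finally show "inner_v x ?lhs = inner_v x ?rhs"
    by (simp add: inner_slice_fst)
qed

lemma app_adj_rhomap_omega: "app (adj (rhomap V (omega a b))) y = slice_snd b (app (adj V) (tensor_v y a))"
  (is "?lhs = ?rhs")
proof (rule vec_eqI)
  fix x
  have "inner_v x (app (adj (rhomap V (omega a b))) y) = cnj (inner_v y (app (rhomap V (omega a b)) x))"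
    by (simp add: inner_adj_left[symmetric] cnj_inner_v)
  also have "\<dots> = cnj (inner_v (tensor_v y a) (app V (tensor_v x b)))"
    by (simp add: inner_rhomap_omega)
  also have "\<dots> = inner_v (tensor_v x b) (app (adj V) (tensor_v y a))"
    by (simp add: cnj_inner_v inner_adj_left)
  finally show "inner_v x ?lhs = inner_v x ?rhs"
    by (simp add: inner_slice_snd)
qed

lemma app_tensor_Lmap_omega_id:
  "app (tensor_op (Lmap V (omega a b)) id_op) w = slice_fst a (app (leg12 V) (tensor_v b w))"
  unfolding app_def slice_fst_def leg12_def tensor_op_def tensor_v_def Lmap_def omega_def inner_v_def id_op_def
  by (rule ext) (clarsimp simp: sum_UNIV_prod3 sum_UNIV_prod sum_distrib_left sum_distrib_right mult_ac,
      rule trans[OF sum_rotate3], simp add: mult_ac)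

lemma app_Lmap_omega_scale_left:
  "app (Lmap V (omega (\<lambda>i. s * a i) b)) z = (\<lambda>j. cnj s * app (Lmap V (omega a b)) z j)"
  by (simp add: app_Lmap_omega slice_fst_def sum_distrib_left mult_ac)

lemma lin_functional_omega: "lin_functional (omega a b)"
  unfolding lin_functional_def omega_def
  by (simp add: app_op_add app_op_scale inner_add_right inner_scale_right)

lemma lin_functional_add: "lin_functional w1 \<Longrightarrow> lin_functional w2 \<Longrightarrow> lin_functional (\<lambda>T. w1 T + w2 T)"
  unfolding lin_functional_def by (simp add: distrib_left)

lemma lin_functional_scale: "lin_functional w \<Longrightarrow> lin_functional (\<lambda>T. c * w T)"
  unfolding lin_functional_def by (simp add: distrib_left mult.left_commute)

lemma lin_functional_sum:
  assumes "lin_functional w" "finite A"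
  shows "w (\<lambda>a b. \<Sum>x\<in>A. g x a b) = (\<Sum>x\<in>A. w (g x))"
  using assms(2)
proof (induction A rule: finite_induct)
  case empty
  have "w (\<lambda>i j. 0 * 0) = 0 * w (\<lambda>i j. 0)"
    using assms(1) unfolding lin_functional_def by (rule conjE) (erule allE)+
  then show ?case by simp
next
  case (insert x F)
  have "w (\<lambda>a b. \<Sum>y\<in>insert x F. g y a b) = w (\<lambda>a b. g x a b + (\<Sum>y\<in>F. g y a b))"
    using insert by simp
  also have "\<dots> = w (g x) + w (\<lambda>a b. \<Sum>y\<in>F. g y a b)"
    using assms(1) unfolding lin_functional_def by simp
  finally show ?case using insert by simp
qed

definition matrix_unit :: "'i \<Rightarrow> 'i \<Rightarrow> 'i op" where
  "matrix_unit i k = (\<lambda>a b. if a = i then (if b = k then 1 else 0) else 0)"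

lemma lin_functional_expansion:
  fixes T :: "'i::finite op"
  assumes "lin_functional w"
  shows "w T = (\<Sum>i\<in>UNIV. \<Sum>k\<in>UNIV. T i k * w (matrix_unit i k))"
proof -
  have T: "T = (\<lambda>a b. \<Sum>i\<in>UNIV. \<Sum>k\<in>UNIV. T i k * matrix_unit i k a b)"
    by (auto simp: matrix_unit_def intro!: ext)
  have "w T = (\<Sum>i\<in>UNIV. \<Sum>k\<in>UNIV. w (\<lambda>a b. T i k * matrix_unit i k a b))"
    by (subst T) (simp add: lin_functional_sum[OF assms])
  also have "\<dots> = (\<Sum>i\<in>UNIV. \<Sum>k\<in>UNIV. T i k * w (matrix_unit i k))"
    using assms unfolding lin_functional_def by simp
  finally show ?thesis .
qed

lemma Lmap_expansion:
  assumes "lin_functional w"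
  shows "Lmap V w = (\<lambda>j l. \<Sum>q\<in>UNIV. w (matrix_unit (fst q) (snd q))
                                     * Lmap V (omega (basis_vec (fst q)) (basis_vec (snd q))) j l)"
proof -
  have "Lmap V (omega (basis_vec i) (basis_vec k)) j l = V (i, j) (k, l)" for i k j l
    by (simp add: Lmap_def omega_def inner_basis_vec_left app_basis_vec)
  then show ?thesis unfolding Lmap_def
    by (subst lin_functional_expansion[OF assms]) (simp add: sum_UNIV_prod mult.commute)
qed

lemma Salg_add: "x \<in> Salg V \<Longrightarrow> y \<in> Salg V \<Longrightarrow> (\<lambda>i j. x i j + y i j) \<in> Salg V"
proof -
  assume "x \<in> Salg V" "y \<in> Salg V"
  then obtain w1 w2 where w: "lin_functional w1" "lin_functional w2" "x = Lmap V w1" "y = Lmap V w2"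
    unfolding Salg_def by blast
  have "(\<lambda>i j. x i j + y i j) = Lmap V (\<lambda>T. w1 T + w2 T)" using w by (simp add: Lmap_def)
  then show ?thesis unfolding Salg_def using lin_functional_add[OF w(1,2)] by blast
qed

lemma Salg_scale: "x \<in> Salg V \<Longrightarrow> (\<lambda>i j. c * x i j) \<in> Salg V"
proof -
  assume "x \<in> Salg V"
  then obtain w where w: "lin_functional w" "x = Lmap V w" unfolding Salg_def by blast
  have "(\<lambda>i j. c * x i j) = Lmap V (\<lambda>T. c * w T)" using w by (simp add: Lmap_def)
  then show ?thesis unfolding Salg_def using lin_functional_scale[OF w(1)] by blast
qed

lemma Lmap_omega_in_Salg: "Lmap V (omega a b) \<in> Salg V"
  unfolding Salg_def using lin_functional_omega by blast

lemma inner_Lmap_omega_comp: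
  "inner_v a (app (Lmap V (omega x1 y1)) (app (Lmap V (omega x2 y2)) b))
   = inner_v (tensor_v x1 (tensor_v x2 a)) (app (leg13 V) (app (leg23 V) (tensor_v y1 (tensor_v y2 b))))"
proof -
  have "inner_v a (app (Lmap V (omega x1 y1)) (app (Lmap V (omega x2 y2)) b))
      = inner_v (slice_fst y1 (app (adj V) (tensor_v x1 a))) (slice_fst x2 (app V (tensor_v y2 b)))"
    by (subst inner_adj_right) (simp add: app_adj_Lmap_omega app_Lmap_omega)
  also have "\<dots> = inner_v (app (leg13 (adj V)) (tensor_v x1 (tensor_v x2 a))) (app (leg23 V) (tensor_v y1 (tensor_v y2 b)))"
    by (simp only: inner_tensor13_tensor_v[symmetric] tensor_v_eq_tensor13[of x1 x2 a] app_leg13_tensor13 app_leg23_tensor_v)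
  finally show ?thesis
    by (simp add: inner_leg13_right)
qed

text \<open>A resolution of the identity inserted between \<open>V\<^sub>1\<^sub>2\<close> and \<open>V\<^sub>1\<^sub>3\<close>.\<close>

lemma inner_leg12_leg13_expansion:
  "inner_v (tensor_v x (tensor_v y z)) (app (leg12 V) (app (leg13 V) (tensor_v h (tensor_v a b))))
   = (\<Sum>m\<in>UNIV. inner_v (tensor_v x y) (app V (tensor_v (basis_vec m) a))
                * inner_v (tensor_v (basis_vec m) z) (app V (tensor_v h b)))"
proof -
  define W where "W = app V (tensor_v h b)"
  have "slice_fst (basis_vec m) W = (\<lambda>r. W (m, r))" for m
    by (auto simp: slice_fst_def basis_vec_def if_distrib[of cnj] cong: if_cong)
  then have W_slice: "inner_v (tensor_v (basis_vec m) z) W = (\<Sum>r\<in>UNIV. cnj (z r) * W (m, r))" for m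
    by (simp only: inner_slice_fst[symmetric]) (simp add: inner_v_def)
  have leg13_expansion: "app (leg13 V) (tensor_v h (tensor_v a b))
      = (\<lambda>x. \<Sum>q\<in>UNIV. W q * tensor12 (tensor_v (basis_vec (fst q)) a) (basis_vec (snd q)) x)"
    unfolding W_def tensor_v_eq_tensor13[of h a b] app_leg13_tensor13
    by (subst vec_basis_expansion) (simp add: tensor13_lincomb_left tensor13_basis_vec)
  have "inner_v (tensor_v x (tensor_v y z)) (app (leg12 V) (app (leg13 V) (tensor_v h (tensor_v a b))))
    = (\<Sum>q\<in>UNIV. W q * (inner_v (tensor_v x y) (app V (tensor_v (basis_vec (fst q)) a)) * cnj (z (snd q))))"
    unfolding leg13_expansion
    by (simp add: app_lincomb inner_lincomb_right app_leg12_tensor12 tensor_v_eq_tensor12 inner_tensor12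
        inner_basis_vec_right)
  also have "\<dots> = (\<Sum>m\<in>UNIV. \<Sum>r\<in>UNIV. W (m, r) * (inner_v (tensor_v x y) (app V (tensor_v (basis_vec m) a)) * cnj (z r)))"
    by (simp add: sum_UNIV_prod)
  also have "\<dots> = (\<Sum>m\<in>UNIV. inner_v (tensor_v x y) (app V (tensor_v (basis_vec m) a)) * inner_v (tensor_v (basis_vec m) z) W)"
    by (simp add: W_slice sum_distrib_left mult_ac)
  finally show ?thesis unfolding W_def .
qed

lemma rhomap_fixes_if_fixed:
  "inner_v p p = 1 \<Longrightarrow> app V (tensor_v v p) = tensor_v v p \<Longrightarrow> app (rhomap V (omega p p)) v = v"
  by (simp add: app_rhomap_omega slice_snd_tensor_v)

lemma Lmap_fixes_if_fixed:
  "inner_v p p = 1 \<Longrightarrow> app V (tensor_v p v) = tensor_v p v \<Longrightarrow> app (Lmap V (omega p p)) v = v"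
  by (simp add: app_Lmap_omega slice_fst_tensor_v)

section \<open>Multiplicative unitaries\<close>

locale mult_unitary =
  fixes V :: "('i::finite \<times> 'i) op"
  assumes multiplicative: "multiplicative_unitary V"
begin

lemma unitary: "unitary_op V"
  using multiplicative by (simp add: multiplicative_unitary_def)

lemma pentagon: "app (leg12 V) (app (leg13 V) (app (leg23 V) v)) = app (leg23 V) (app (leg12 V) v)"
proof -
  have "comp_op (comp_op (leg12 V) (leg13 V)) (leg23 V) = comp_op (leg23 V) (leg12 V)"
    using multiplicative by (simp add: multiplicative_unitary_def)
  then show ?thesis
    by (metis app_comp_op)
qed

lemma V_inverse [simp]: "app (adj V) (app V v) = v" "app V (app (adj V) v) = v"
  using unitary by (simp_all add: unitary_adj_app unitary_app_adj)

lemma leg12_inverse [simp]: "app (leg12 (adj V)) (app (leg12 V) v) = v" "app (leg12 V) (app (leg12 (adj V)) v) = v"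
  using unitary_adj_app[OF unitary_leg12[OF unitary]] unitary_app_adj[OF unitary_leg12[OF unitary]]
  by (simp_all add: adj_leg12)

lemma leg13_inverse [simp]: "app (leg13 (adj V)) (app (leg13 V) v) = v" "app (leg13 V) (app (leg13 (adj V)) v) = v"
  using unitary_adj_app[OF unitary_leg13[OF unitary]] unitary_app_adj[OF unitary_leg13[OF unitary]]
  by (simp_all add: adj_leg13)

lemma leg23_inverse [simp]: "app (leg23 (adj V)) (app (leg23 V) v) = v" "app (leg23 V) (app (leg23 (adj V)) v) = v"
  using unitary_adj_app[OF unitary_leg23[OF unitary]] unitary_app_adj[OF unitary_leg23[OF unitary]]
  by (simp_all add: adj_leg23)

lemma pentagon_leg12_leg13:
  "app (leg12 V) (app (leg13 V) v) = app (leg23 V) (app (leg12 V) (app (leg23 (adj V)) v))"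
  using pentagon[of "app (leg23 (adj V)) v"] by simp

lemma pentagon_leg13_leg23:
  "app (leg13 V) (app (leg23 V) v) = app (leg12 (adj V)) (app (leg23 V) (app (leg12 V) v))"
  using arg_cong[OF pentagon[of v], of "app (leg12 (adj V))"] by simp

lemma pentagon_leg23_leg12_adj:
  "app (leg23 V) (app (leg12 (adj V)) v) = app (leg13 (adj V)) (app (leg12 (adj V)) (app (leg23 V) v))"
proof -
  have "app (leg12 V) (app (leg13 V) (app (leg23 V) (app (leg12 (adj V)) v))) = app (leg23 V) v"
    using pentagon[of "app (leg12 (adj V)) v"] by simp
  then show ?thesis
    by (metis leg12_inverse(1) leg13_inverse(1))
qed

lemma adj_fixes: "app V v = v \<Longrightarrow> app (adj V) v = v"
  by (rule unitary_adj_fixes[OF unitary])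

lemma fixed_pair_trans:
  assumes am: "app V (tensor_v a m) = tensor_v a m" and mk: "app V (tensor_v m k) = tensor_v m k"
    and m: "m \<noteq> (\<lambda>i. 0)"
  shows "app V (tensor_v a k) = tensor_v a k"
proof -
  define v where "v = tensor_v a (tensor_v m k)"
  have v23: "app (leg23 V) v = v" unfolding v_def by (simp add: app_leg23_tensor_v mk)
  have v12: "app (leg12 V) v = v" unfolding v_def by (simp add: tensor_v_eq_tensor12 app_leg12_tensor12 am)
  have "app (leg12 V) (app (leg13 V) v) = app (leg12 V) v"
    using pentagon[of v] v23 v12 by simp
  then have "app (leg13 V) v = v"
    using v12 by (metis leg12_inverse(1))
  then have "tensor13 (app V (tensor_v a k)) m = tensor13 (tensor_v a k) m"
    unfolding v_def by (simp add: tensor_v_eq_tensor13 app_leg13_tensor13)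
  then show ?thesis using m by (rule tensor13_cancel_right)
qed

lemma fixed_if_rhomap_fixes:
  assumes "inner_v p p = 1" "app (rhomap V (omega p p)) v = v"
  shows "app V (tensor_v v p) = tensor_v v p"
proof (rule unitary_fixes_if_inner_eq[OF unitary])
  show "inner_v (tensor_v v p) (app V (tensor_v v p)) = inner_v (tensor_v v p) (tensor_v v p)"
    using assms inner_rhomap_omega[of v V p p v] by (simp add: inner_tensor_v)
qed

lemma fixed_if_Lmap_fixes:
  assumes "inner_v p p = 1" "app (Lmap V (omega p p)) v = v"
  shows "app V (tensor_v p v) = tensor_v p v"
proof (rule unitary_fixes_if_inner_eq[OF unitary])
  show "inner_v (tensor_v p v) (app V (tensor_v p v)) = inner_v (tensor_v p v) (tensor_v p v)"
    using assms inner_Lmap_omega[of v V p p v] by (simp add: inner_tensor_v)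
qed

context
  fixes p :: "'i vec"
  assumes p_fixed: "app V (tensor_v p p) = tensor_v p p" and p_unit: "inner_v p p = 1"
begin

lemma rhomap_idem:
  "app (rhomap V (omega p p)) (app (rhomap V (omega p p)) b) = app (rhomap V (omega p p)) b"
  (is "?lhs = ?rhs")
proof (rule vec_eqI)
  fix a :: "'i vec"
  define A3 where "A3 = tensor_v a (tensor_v p p)"
  define B3 where "B3 = tensor_v b (tensor_v p p)"
  have A3_fixed: "app (leg23 (adj V)) A3 = A3" and B3_fixed: "app (leg23 (adj V)) B3 = B3"
    unfolding A3_def B3_def by (simp_all add: app_leg23_tensor_v adj_fixes p_fixed)
  have "inner_v a (app (rhomap V (omega p p)) (app (rhomap V (omega p p)) b))
      = inner_v (slice_snd p (app (adj V) (tensor_v a p))) (slice_snd p (app V (tensor_v b p)))"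
    by (subst inner_adj_right) (simp add: app_adj_rhomap_omega app_rhomap_omega)
  also have "\<dots> = inner_v (app (leg12 (adj V)) A3) (app (leg13 V) B3)"
    unfolding A3_def B3_def
    by (simp only: inner_tensor12_tensor13[symmetric] tensor_v_eq_tensor12[of a p p]
        tensor_v_eq_tensor13[of b p p] app_leg12_tensor12 app_leg13_tensor13)
  also have "\<dots> = inner_v A3 (app (leg23 V) (app (leg12 V) B3))"
    by (simp add: inner_leg12_adj_right[symmetric] pentagon_leg12_leg13 B3_fixed)
  also have "\<dots> = inner_v A3 (app (leg12 V) B3)"
    by (simp add: inner_leg23_right A3_fixed)
  also have "\<dots> = inner_v a (app (rhomap V (omega p p)) b)"
    unfolding A3_def B3_def
    by (simp add: tensor_v_eq_tensor12 app_leg12_tensor12 inner_tensor12 p_unit inner_rhomap_omega)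
  finally show "inner_v a ?lhs = inner_v a ?rhs" .
qed

lemma Lmap_idem:
  "app (Lmap V (omega p p)) (app (Lmap V (omega p p)) b) = app (Lmap V (omega p p)) b"
  (is "?lhs = ?rhs")
proof (rule vec_eqI)
  fix a :: "'i vec"
  define A3 where "A3 = tensor_v p (tensor_v p a)"
  define B3 where "B3 = tensor_v p (tensor_v p b)"
  have A3_fixed: "app (leg12 V) A3 = A3" and B3_fixed: "app (leg12 V) B3 = B3"
    unfolding A3_def B3_def by (simp_all add: tensor_v_eq_tensor12 app_leg12_tensor12 p_fixed)
  have "inner_v a (app (Lmap V (omega p p)) (app (Lmap V (omega p p)) b))
      = inner_v A3 (app (leg13 V) (app (leg23 V) B3))"
    unfolding A3_def B3_def by (rule inner_Lmap_omega_comp)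
  also have "\<dots> = inner_v A3 (app (leg23 V) B3)"
    by (simp add: pentagon_leg13_leg23 B3_fixed inner_leg12_adj_right A3_fixed)
  also have "\<dots> = inner_v a (app (Lmap V (omega p p)) b)"
    unfolding A3_def B3_def by (simp add: app_leg23_tensor_v inner_tensor_v p_unit inner_Lmap_omega)
  finally show "inner_v a ?lhs = inner_v a ?rhs" .
qed

lemma rhomap_range_fixed:
  "app V (tensor_v (app (rhomap V (omega p p)) b) p) = tensor_v (app (rhomap V (omega p p)) b) p"
  by (rule fixed_if_rhomap_fixes[OF p_unit rhomap_idem])

lemma Lmap_range_fixed:
  "app V (tensor_v p (app (Lmap V (omega p p)) b)) = tensor_v p (app (Lmap V (omega p p)) b)"
  by (rule fixed_if_Lmap_fixes[OF p_unit Lmap_idem])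

lemma adj_rhomap_self: "adj (rhomap V (omega p p)) = rhomap V (omega p p)"
proof -
  let ?R = "rhomap V (omega p p)"
  have "app (comp_op (adj ?R) ?R) b = app ?R b" for b
    using adj_fixes[OF rhomap_range_fixed]
    by (simp add: app_comp_op app_adj_rhomap_omega slice_snd_tensor_v p_unit)
  then have c: "comp_op (adj ?R) ?R = ?R" by (rule op_eqI)
  have "comp_op (adj ?R) ?R = adj ?R"
    using arg_cong[OF c, of adj] by (simp only: adj_comp_op adj_adj)
  with c show ?thesis by simp
qed

end

definition trace_slice :: "'i op" where
  "trace_slice = (\<lambda>j l. \<Sum>i\<in>UNIV. Lmap V (omega (basis_vec i) (basis_vec i)) j l)"

lemma inner_trace_slice:
  "inner_v a (app trace_slice b) = (\<Sum>i\<in>UNIV. inner_v (tensor_v (basis_vec i) a) (app V (tensor_v (basis_vec i) b)))"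
  by (simp add: trace_slice_def app_op_sum inner_sum_right inner_Lmap_omega)

lemma trace_slice_square:
  "app trace_slice (app trace_slice b) = (\<lambda>j. of_nat (card (UNIV :: 'i set)) * app trace_slice b j)"
  (is "?lhs = ?rhs")
proof (rule vec_eqI)
  fix a :: "'i vec"
  define G where "G p = inner_v (tensor12 (app V (basis_vec p)) a) (app (leg23 V) (tensor12 (app V (basis_vec p)) b))" for p
  have "inner_v a (app trace_slice (app trace_slice b))
      = (\<Sum>i\<in>UNIV. \<Sum>i'\<in>UNIV. inner_v a (app (Lmap V (omega (basis_vec i) (basis_vec i)))
                                   (app (Lmap V (omega (basis_vec i') (basis_vec i'))) b)))"
    by (simp add: trace_slice_def app_op_sum app_sum inner_sum_right)
  also have "\<dots> = (\<Sum>i\<in>UNIV. \<Sum>i'\<in>UNIV. G (i, i'))"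
  proof (intro sum.cong refl)
    fix i i' :: 'i
    let ?x = "tensor_v (basis_vec i) (tensor_v (basis_vec i') a)"
    let ?y = "tensor_v (basis_vec i) (tensor_v (basis_vec i') b)"
    have "inner_v a (app (Lmap V (omega (basis_vec i) (basis_vec i))) (app (Lmap V (omega (basis_vec i') (basis_vec i'))) b))
        = inner_v ?x (app (leg12 (adj V)) (app (leg23 V) (app (leg12 V) ?y)))"
      by (simp add: inner_Lmap_omega_comp pentagon_leg13_leg23)
    also have "\<dots> = inner_v (app (leg12 V) ?x) (app (leg23 V) (app (leg12 V) ?y))"
      by (simp add: inner_leg12_adj_right)
    also have "\<dots> = G (i, i')"
      unfolding G_def by (simp add: tensor_v_eq_tensor12 app_leg12_tensor12 tensor_basis_vec)
    finally show "inner_v a (app (Lmap V (omega (basis_vec i) (basis_vec i))) (app (Lmap V (omega (basis_vec i') (basis_vec i'))) b))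
        = G (i, i')" .
  qed
  also have "\<dots> = (\<Sum>p\<in>UNIV. G p)"
    by (simp add: sum_UNIV_prod)
  also have "\<dots> = (\<Sum>p\<in>UNIV. inner_v (tensor12 (basis_vec p) a) (app (leg23 V) (tensor12 (basis_vec p) b)))"
    unfolding G_def by (rule sum_tensor12_unitary_basis[OF unitary])
  also have "\<dots> = (\<Sum>i\<in>(UNIV::'i set). \<Sum>i'\<in>UNIV. inner_v (tensor_v (basis_vec i') a) (app V (tensor_v (basis_vec i') b)))"
    by (simp add: sum_UNIV_prod tensor_basis_vec[symmetric] tensor_v_eq_tensor12[symmetric] app_leg23_tensor_v
        inner_tensor_v inner_basis_vec_self)
  also have "\<dots> = inner_v a ?rhs"
    by (simp add: inner_trace_slice inner_scale_right)
  finally show "inner_v a ?lhs = inner_v a ?rhs" .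
qed

lemma inner_delta_Lmap_omega:
  "inner_v y (app (delta V (Lmap V (omega a b))) u)
   = inner_v (tensor_v a y) (app (leg12 V) (app (leg13 V) (tensor_v b u)))"
proof -
  have "inner_v y (app (delta V (Lmap V (omega a b))) u)
     = inner_v (app (adj V) y) (app (tensor_op (Lmap V (omega a b)) id_op) (app (adj V) u))"
    unfolding delta_def by (simp add: app_comp_op inner_adj_right)
  also have "\<dots> = inner_v (app (leg23 (adj V)) (tensor_v a y)) (app (leg12 V) (app (leg23 (adj V)) (tensor_v b u)))"
    by (simp add: app_tensor_Lmap_omega_id inner_slice_fst app_leg23_tensor_v)
  also have "\<dots> = inner_v (tensor_v a y) (app (leg12 V) (app (leg13 V) (tensor_v b u)))"
    by (simp add: inner_leg23_right pentagon_leg12_leg13)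
  finally show ?thesis .
qed

lemma delta_Lmap_omega:
  "delta V (Lmap V (omega a b))
   = (\<lambda>p q. \<Sum>m\<in>UNIV. tensor_op (Lmap V (omega a (basis_vec m))) (Lmap V (omega (basis_vec m) b)) p q)"
  (is "?lhs = ?rhs")
proof (rule op_eq_tensorI, rule vec_eq_tensorI)
  fix c d y z :: "'i vec"
  have "inner_v (tensor_v y z) (app ?lhs (tensor_v c d))
      = (\<Sum>m\<in>UNIV. inner_v (tensor_v a y) (app V (tensor_v (basis_vec m) c))
                  * inner_v (tensor_v (basis_vec m) z) (app V (tensor_v b d)))"
    by (simp add: inner_delta_Lmap_omega inner_leg12_leg13_expansion)
  also have "\<dots> = inner_v (tensor_v y z) (app ?rhs (tensor_v c d))"
    by (simp add: app_op_sum app_tensor_op inner_sum_right inner_tensor_v inner_Lmap_omega)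
  finally show "inner_v (tensor_v y z) (app ?lhs (tensor_v c d)) = inner_v (tensor_v y z) (app ?rhs (tensor_v c d))" .
qed

lemma delta_Lmap_omega_apply_fixed:
  assumes fixed: "app V (tensor_v \<eta> k) = tensor_v \<eta> k"
  shows "app (delta V (Lmap V (omega a \<eta>))) (tensor_v b k) = tensor_v (app (Lmap V (omega a \<eta>)) b) k"
    (is "?lhs = ?rhs")
proof (rule vec_eqI)
  fix y :: "('i \<times> 'i) vec"
  have "app (leg13 V) (tensor_v \<eta> (tensor_v b k)) = tensor_v \<eta> (tensor_v b k)"
    by (simp add: tensor_v_eq_tensor13 app_leg13_tensor13 fixed)
  then show "inner_v y ?lhs = inner_v y ?rhs"
    by (simp add: inner_delta_Lmap_omega tensor_v_eq_tensor12 app_leg12_tensor12 inner_slice_fst[symmetric]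
        slice_fst_tensor12 app_Lmap_omega)
qed

lemma Lmap_omega_comp:
  assumes bp: "app V (tensor_v b p) = tensor_v b p"
  shows "comp_op (Lmap V (omega a b)) (Lmap V (omega \<xi> p)) = Lmap V (omega (app (Lmap V (omega b a)) \<xi>) p)"
    (is "?lhs = ?rhs")
proof (rule op_eqI, rule vec_eqI)
  fix y z :: "'i vec"
  have "app (leg12 V) (tensor_v b (tensor_v p z)) = tensor_v b (tensor_v p z)"
    by (simp add: tensor_v_eq_tensor12 app_leg12_tensor12 bp)
  then have "inner_v y (app (Lmap V (omega a b)) (app (Lmap V (omega \<xi> p)) z))
     = inner_v (app (leg12 V) (tensor_v a (tensor_v \<xi> y))) (app (leg23 V) (tensor_v b (tensor_v p z)))"
    by (simp add: inner_Lmap_omega_comp pentagon_leg13_leg23 inner_leg12_adj_right)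
  also have "\<dots> = inner_v (tensor12 (app V (tensor_v a \<xi>)) y) (tensor_v b (app V (tensor_v p z)))"
    by (simp only: tensor_v_eq_tensor12[of a \<xi> y] app_leg12_tensor12 app_leg23_tensor_v)
  also have "\<dots> = inner_v y (app ?rhs z)"
    by (simp add: inner_tensor12_tensor_v app_Lmap_omega inner_slice_fst)
  finally show "inner_v y (app ?lhs z) = inner_v y (app ?rhs z)"
    by (simp add: app_comp_op)
qed

lemma Lmap_omega_preserves_fixed:
  assumes p_unit: "inner_v p p = 1" and bp: "app V (tensor_v b p) = tensor_v b p"
    and zp: "app V (tensor_v z p) = tensor_v z p"
  shows "app V (tensor_v (app (Lmap V (omega a b)) z) p) = tensor_v (app (Lmap V (omega a b)) z) p"
proof (rule fixed_if_rhomap_fixes[OF p_unit], rule vec_eqI)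
  fix y :: "'i vec"
  define W where "W = app V (tensor_v b z)"
  have "inner_v y (app (rhomap V (omega p p)) (app (Lmap V (omega a b)) z))
      = inner_v (tensor_v a (tensor_v y p)) (app (leg23 V) (tensor12 W p))"
    unfolding W_def by (simp add: inner_rhomap_omega app_Lmap_omega app_tensor_slice_fst inner_slice_fst)
  also have "tensor12 W p = app (leg12 V) (tensor_v b (tensor_v z p))"
    unfolding W_def by (simp add: tensor_v_eq_tensor12 app_leg12_tensor12)
  also have "app (leg23 V) (app (leg12 V) (tensor_v b (tensor_v z p)))
     = app (leg12 V) (app (leg13 V) (app (leg23 V) (tensor_v b (tensor_v z p))))"
    by (simp add: pentagon)
  also have "app (leg13 V) (app (leg23 V) (tensor_v b (tensor_v z p))) = tensor_v b (tensor_v z p)"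
    by (simp add: app_leg23_tensor_v zp) (simp add: tensor_v_eq_tensor13 app_leg13_tensor13 bp)
  also have "inner_v (tensor_v a (tensor_v y p)) (app (leg12 V) (tensor_v b (tensor_v z p)))
     = inner_v y (app (Lmap V (omega a b)) z)"
    unfolding W_def by (simp add: tensor_v_eq_tensor12 app_leg12_tensor12 inner_tensor12 p_unit inner_Lmap_omega)
  finally show "inner_v y (app (rhomap V (omega p p)) (app (Lmap V (omega a b)) z)) = inner_v y (app (Lmap V (omega a b)) z)" .
qed

lemma right_fixed_if_trace_slice_eigen:
  assumes eigen: "app trace_slice c = (\<lambda>j. of_nat (card (UNIV :: 'i set)) * c j)"
  shows "app V (tensor_v b c) = tensor_v b c"
proof -
  have "(\<Sum>i\<in>UNIV. inner_v (tensor_v (basis_vec i) c) (app V (tensor_v (basis_vec i) c)))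
      = inner_v c (app trace_slice c)"
    by (simp add: inner_trace_slice)
  also have "\<dots> = (\<Sum>i\<in>(UNIV :: 'i set). inner_v (tensor_v (basis_vec i) c) (tensor_v (basis_vec i) c))"
    by (simp add: eigen inner_scale_right inner_tensor_v inner_basis_vec_self)
  finally have basis_fixed: "app V (tensor_v (basis_vec i) c) = tensor_v (basis_vec i) c" for i
    using unitary_fixes_if_sum_inner_eq[OF unitary finite_UNIV, of "\<lambda>i. tensor_v (basis_vec i) c"] by simp
  have b: "tensor_v b c = (\<lambda>x. \<Sum>q\<in>UNIV. b q * tensor_v (basis_vec q) c x)"
    by (subst vec_basis_expansion[of b]) (simp add: tensor_v_lincomb_left)
  show ?thesis
    by (subst (1 2) b) (simp add: app_lincomb basis_fixed)
qed

end

section \<open>Multiplicity one\<close>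

locale mult_unitary_mult_one = mult_unitary V for V :: "('i::finite \<times> 'i) op" +
  fixes e :: "'i vec"
  assumes fixed_vec_iff: "\<forall>\<xi>. fixed_vec V \<xi> \<longleftrightarrow> (\<exists>c. \<xi> = (\<lambda>i. c * e i))"
    and e_unit: "inner_v e e = 1"
begin

lemma e_fixed: "app V (tensor_v e y) = tensor_v e y"
  using fixed_vec_iff unfolding fixed_vec_def by (metis mult_1)

lemma e_nonzero: "e \<noteq> (\<lambda>i. 0)"
  using e_unit by (auto simp: inner_v_def)

lemma multiple_of_e_if_fixed_with_e:
  assumes "app V (tensor_v v e) = tensor_v v e"
  shows "\<exists>c. v = (\<lambda>i. c * e i)"
  using fixed_pair_trans[OF assms e_fixed e_nonzero] fixed_vec_iff unfolding fixed_vec_def by blast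

text \<open>\<open>\<rho>\<^sub>e\<close> is the projection onto the line \<open>\<complex> e\<close>.\<close>

lemma trace_rhomap_e: "(\<Sum>i\<in>UNIV. inner_v (basis_vec i) (app (rhomap V (omega e e)) (basis_vec i))) = 1"
proof -
  define R where "R = rhomap V (omega e e)"
  have "\<forall>k. \<exists>s. app R (basis_vec k) = (\<lambda>i. s * e i)"
    unfolding R_def using multiple_of_e_if_fixed_with_e[OF rhomap_range_fixed[OF e_fixed e_unit]] by blast
  then obtain s where s: "\<And>k. app R (basis_vec k) = (\<lambda>i. s k * e i)"
    by (metis choice)
  have "e = app R e"
    unfolding R_def by (simp add: rhomap_fixes_if_fixed e_unit e_fixed)
  also have "\<dots> = app R (\<lambda>x. \<Sum>q\<in>UNIV. e q * basis_vec q x)"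
    by (simp flip: vec_basis_expansion)
  also have "\<dots> = (\<lambda>x. (\<Sum>q\<in>UNIV. e q * s q) * e x)"
    by (simp add: app_lincomb s sum_distrib_right mult.assoc)
  finally have "e = (\<lambda>x. (\<Sum>q\<in>UNIV. e q * s q) * e x)" .
  moreover obtain i0 where "e i0 \<noteq> 0"
    using e_nonzero by auto
  ultimately have "(\<Sum>q\<in>UNIV. e q * s q) = 1"
    by (metis mult_cancel_right1)
  then show ?thesis
    by (simp add: R_def[symmetric] inner_basis_vec_left s mult.commute)
qed

text \<open>The vector \<open>c\<close> of the reconstruction formula \<open>x = L(\<omega>\<^bsub>c, x e\<^esub>)\<close>.\<close>

definition cofixed_vec :: "'i vec" where
  "cofixed_vec = app trace_slice e"

lemma inner_e_cofixed_vec: "inner_v e cofixed_vec = 1"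
  using trace_rhomap_e by (simp add: cofixed_vec_def inner_trace_slice inner_rhomap_omega)

lemma inner_cofixed_vec_e: "inner_v cofixed_vec e = 1"
  using inner_e_cofixed_vec cnj_inner_v[of e cofixed_vec] by simp

lemma cofixed_vec_fixed: "app V (tensor_v b cofixed_vec) = tensor_v b cofixed_vec"
  by (rule right_fixed_if_trace_slice_eigen) (simp add: cofixed_vec_def trace_slice_square)

lemma Lmap_omega_e_left: "Lmap V (omega e b) = (\<lambda>j l. inner_v e b * id_op j l)" (is "?lhs = ?rhs")
proof (rule op_eqI, rule vec_eqI)
  fix x y
  have "inner_v y (app (Lmap V (omega e b)) x) = inner_v (app (adj V) (tensor_v e y)) (tensor_v b x)"
    unfolding inner_Lmap_omega by (rule inner_adj_right)
  then show "inner_v y (app ?lhs x) = inner_v y (app ?rhs x)"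
    by (simp add: adj_fixes e_fixed inner_tensor_v app_op_scale inner_scale_right)
qed

lemma id_op_in_Salg: "id_op \<in> Salg V"
  using Lmap_omega_in_Salg[of V e e] by (simp add: Lmap_omega_e_left e_unit)

lemma Lmap_omega_reconstruction:
  "Lmap V (omega a b) = Lmap V (omega cofixed_vec (app (Lmap V (omega a b)) e))" (is "?lhs = ?rhs")
proof (rule op_eqI, rule vec_eqI)
  fix x y :: "'i vec"
  define W where "W = app V (tensor_v b e)"
  have "inner_v y (app (Lmap V (omega cofixed_vec (app (Lmap V (omega a b)) e))) x)
      = inner_v (tensor_v a (tensor_v cofixed_vec y)) (app (leg23 V) (tensor12 W x))"
    unfolding W_def by (simp add: inner_Lmap_omega app_Lmap_omega app_tensor_slice_fst inner_slice_fst)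
  also have "tensor12 W x = app (leg12 V) (tensor_v b (tensor_v e x))"
    unfolding W_def by (simp add: tensor_v_eq_tensor12 app_leg12_tensor12)
  also have "app (leg23 V) (app (leg12 V) (tensor_v b (tensor_v e x)))
      = app (leg12 V) (app (leg13 V) (tensor_v b (tensor_v e x)))"
    using pentagon[of "tensor_v b (tensor_v e x)"] by (simp add: app_leg23_tensor_v e_fixed)
  also have "inner_v (tensor_v a (tensor_v cofixed_vec y)) (app (leg12 V) (app (leg13 V) (tensor_v b (tensor_v e x))))
      = inner_v (tensor_v a (tensor_v cofixed_vec y)) (app (leg13 V) (tensor_v b (tensor_v e x)))"
    by (simp add: inner_leg12_right tensor_v_eq_tensor12 app_leg12_tensor12 adj_fixes cofixed_vec_fixed)
  also have "\<dots> = inner_v y (app (Lmap V (omega a b)) x)"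
    by (simp add: tensor_v_eq_tensor13 app_leg13_tensor13 inner_tensor13 inner_cofixed_vec_e inner_Lmap_omega)
  finally show "inner_v y (app ?lhs x) = inner_v y (app ?rhs x)"
    by simp
qed

lemma Salg_reconstruction:
  assumes "x \<in> Salg V"
  shows "x = Lmap V (omega cofixed_vec (app x e))"
proof -
  obtain w where w: "lin_functional w" and x: "x = Lmap V w"
    using assms unfolding Salg_def by blast
  define c where "c q = w (matrix_unit (fst q) (snd q))" for q :: "'i \<times> 'i"
  define B where "B q = Lmap V (omega (basis_vec (fst q)) (basis_vec (snd q)))" for q :: "'i \<times> 'i"
  have x_expansion: "x = (\<lambda>j l. \<Sum>q\<in>UNIV. c q * B q j l)"
    unfolding x c_def B_def by (rule Lmap_expansion[OF w])
  have app_x: "app x b = (\<lambda>j. \<Sum>q\<in>UNIV. c q * app (B q) b j)" for b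
    unfolding x_expansion app_def by (rule ext) (simp add: sum_distrib_left sum_distrib_right mult_ac, rule sum.swap)
  have "app (Lmap V (omega cofixed_vec (app x e))) b = app x b" for b
  proof -
    have "app (Lmap V (omega cofixed_vec (app x e))) b
        = (\<lambda>j. \<Sum>q\<in>UNIV. c q * slice_fst cofixed_vec (app V (tensor_v (app (B q) e) b)) j)"
      by (simp add: app_Lmap_omega app_x tensor_v_lincomb_left app_lincomb slice_fst_lincomb)
    also have "\<dots> = app x b"
    proof -
      have "slice_fst cofixed_vec (app V (tensor_v (app (B q) e) b)) = app (B q) b" for q
        unfolding B_def by (subst (2) Lmap_omega_reconstruction) (simp only: app_Lmap_omega)
      then show ?thesis
        by (simp add: app_x)
    qed
    finally show ?thesis .
  qed
  then show ?thesis
    by (intro op_eqI) simp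
qed

lemma adj_Lmap_omega_reconstruction:
  "adj (Lmap V (omega \<xi> p)) = Lmap V (omega cofixed_vec (app (adj (Lmap V (omega \<xi> p))) e))"
  (is "?lhs = ?rhs")
proof (rule op_eqI, rule vec_eqI)
  fix x y :: "'i vec"
  define W where "W = app (adj V) (tensor_v \<xi> e)"
  define U where "U = app V (tensor_v p y)"
  have "inner_v y (app (Lmap V (omega cofixed_vec (slice_fst p W))) x)
      = inner_v (tensor_v p (tensor_v cofixed_vec y)) (app (leg23 V) (tensor12 W x))"
    by (simp add: inner_Lmap_omega app_tensor_slice_fst inner_slice_fst)
  also have "tensor12 W x = app (leg12 (adj V)) (tensor_v \<xi> (tensor_v e x))"
    unfolding W_def by (simp add: tensor_v_eq_tensor12 app_leg12_tensor12)
  also have "app (leg23 V) (app (leg12 (adj V)) (tensor_v \<xi> (tensor_v e x)))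
      = app (leg13 (adj V)) (app (leg12 (adj V)) (tensor_v \<xi> (tensor_v e x)))"
    by (simp add: pentagon_leg23_leg12_adj app_leg23_tensor_v e_fixed)
  also have "inner_v (tensor_v p (tensor_v cofixed_vec y)) \<dots>
      = inner_v (app (leg12 V) (tensor13 U cofixed_vec)) (tensor_v \<xi> (tensor_v e x))"
    unfolding U_def
    by (simp add: inner_leg13_adj_right tensor_v_eq_tensor13[of p] app_leg13_tensor13 inner_leg12_adj_right)
  also have "\<dots> = inner_v U (tensor_v \<xi> x)"
    by (simp add: leg12_fixes_tensor13 cofixed_vec_fixed tensor_v_eq_tensor13[of \<xi>] inner_tensor13 inner_cofixed_vec_e)
  also have "\<dots> = inner_v y (app (adj (Lmap V (omega \<xi> p))) x)"
    unfolding U_def by (simp add: app_adj_Lmap_omega inner_slice_fst inner_adj_left)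
  finally show "inner_v y (app ?lhs x) = inner_v y (app ?rhs x)"
    by (simp add: app_adj_Lmap_omega W_def)
qed

lemma adj_Lmap_omega_in_Salg: "adj (Lmap V (omega \<xi> p)) \<in> Salg V"
  by (subst adj_Lmap_omega_reconstruction) (rule Lmap_omega_in_Salg)

lemma adj_Lmap_omega_e_fixed:
  assumes p_fixed: "app V (tensor_v p p) = tensor_v p p" and p_unit: "inner_v p p = 1"
  shows "app V (tensor_v (app (adj (Lmap V (omega \<xi> p))) e) p) = tensor_v (app (adj (Lmap V (omega \<xi> p))) e) p"
proof (rule fixed_if_rhomap_fixes[OF p_unit], rule vec_eqI)
  fix a :: "'i vec"
  define W where "W = app (adj V) (tensor_v \<xi> e)"
  have "inner_v a (app (rhomap V (omega p p)) (slice_fst p W))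
      = inner_v (tensor_v p (tensor_v a p)) (app (leg23 V) (tensor12 W p))"
    by (simp add: inner_rhomap_omega app_tensor_slice_fst inner_slice_fst)
  also have "tensor12 W p = app (leg12 (adj V)) (tensor_v \<xi> (tensor_v e p))"
    unfolding W_def by (simp add: tensor_v_eq_tensor12 app_leg12_tensor12)
  also have "app (leg23 V) (app (leg12 (adj V)) (tensor_v \<xi> (tensor_v e p)))
      = app (leg13 (adj V)) (app (leg12 (adj V)) (tensor_v \<xi> (tensor_v e p)))"
    by (simp add: pentagon_leg23_leg12_adj app_leg23_tensor_v e_fixed)
  also have "inner_v (tensor_v p (tensor_v a p)) \<dots>
      = inner_v (tensor_v p (tensor_v a p)) (app (leg12 (adj V)) (tensor_v \<xi> (tensor_v e p)))"
    by (simp add: inner_leg13_adj_right tensor_v_eq_tensor13[of p a p] app_leg13_tensor13 p_fixed)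
  also have "\<dots> = inner_v a (slice_fst p W)"
    unfolding W_def by (simp add: tensor_v_eq_tensor12 app_leg12_tensor12 inner_tensor12 p_unit inner_slice_fst)
  finally show "inner_v a (app (rhomap V (omega p p)) (app (adj (Lmap V (omega \<xi> p))) e))
      = inner_v a (app (adj (Lmap V (omega \<xi> p))) e)"
    by (simp add: app_adj_Lmap_omega W_def)
qed

end

section \<open>The algebra attached to a pre-subgroup\<close>

locale pre_subgroup_setting = mult_unitary_mult_one V e for V :: "('i::finite \<times> 'i) op" and e +
  fixes f :: "'i vec"
  assumes pre_subgroup: "pre_subgroup V e f"
begin

lemma f_unit: "inner_v f f = 1"
  using pre_subgroup by (simp add: pre_subgroup_def)

lemma f_fixed: "app V (tensor_v f f) = tensor_v f f"
  using pre_subgroup by (simp add: pre_subgroup_def)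

lemma f_nonzero: "f \<noteq> (\<lambda>i. 0)"
  using f_unit by (auto simp: inner_v_def)

lemma inner_e_f_nonzero: "inner_v e f \<noteq> 0"
  using pre_subgroup cnj_inner_v[of e f] by (auto simp: pre_subgroup_def)

lemma mem_G_f: "x \<in> G_f V e f \<longleftrightarrow> x \<in> Salg V \<and> app V (tensor_v (app x e) f) = tensor_v (app x e) f"
  by (simp add: G_f_def H_f_def)

lemma G_f_elim:
  assumes "x \<in> G_f V e f"
  obtains \<eta> where "x = Lmap V (omega cofixed_vec \<eta>)" "app V (tensor_v \<eta> f) = tensor_v \<eta> f"
  using assms Salg_reconstruction unfolding mem_G_f by blast

lemma Lmap_omega_in_G_f:
  assumes "app V (tensor_v b f) = tensor_v b f"
  shows "Lmap V (omega a b) \<in> G_f V e f"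
  unfolding mem_G_f using Lmap_omega_in_Salg Lmap_omega_preserves_fixed[OF f_unit assms e_fixed] by blast

lemma G_f_eq_Lmap_omega_f: "G_f V e f = {Lmap V (omega \<xi> f) | \<xi>. True}"
proof
  show "{Lmap V (omega \<xi> f) | \<xi>. True} \<subseteq> G_f V e f"
    using Lmap_omega_in_G_f[OF f_fixed] by blast
next
  show "G_f V e f \<subseteq> {Lmap V (omega \<xi> f) | \<xi>. True}"
  proof
    fix x assume "x \<in> G_f V e f"
    then obtain \<eta> where x: "x = Lmap V (omega cofixed_vec \<eta>)"
      and \<eta>_fixed: "app V (tensor_v \<eta> f) = tensor_v \<eta> f"
      by (rule G_f_elim)
    \<comment> \<open>\<open>L(\<omega>\<^bsub>e, f\<^esub>)\<close> is the scalar \<open>\<langle>e, f\<rangle> \<noteq> 0\<close>, and \<open>x L(\<omega>\<^bsub>e, f\<^esub>)\<close> is a slice with second vector \<open>f\<close>.\<close>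
    define c where "c = inner_v e f"
    define \<zeta> where "\<zeta> = app (Lmap V (omega \<eta> cofixed_vec)) e"
    have "comp_op x (Lmap V (omega e f)) = Lmap V (omega \<zeta> f)"
      unfolding x \<zeta>_def by (rule Lmap_omega_comp[OF \<eta>_fixed])
    then have \<zeta>: "app (Lmap V (omega \<zeta> f)) z = (\<lambda>j. c * app x z j)" for z
      using app_comp_op[of x "Lmap V (omega e f)" z]
      by (simp add: Lmap_omega_e_left app_op_scale app_scale c_def)
    have "x = Lmap V (omega (\<lambda>i. (1 / cnj c) * \<zeta> i) f)"
    proof (rule op_eqI)
      fix z
      have "app (Lmap V (omega (\<lambda>i. (1 / cnj c) * \<zeta> i) f)) z = (\<lambda>j. cnj (1 / cnj c) * (c * app x z j))"
        by (simp only: app_Lmap_omega_scale_left \<zeta>)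
      then show "app x z = app (Lmap V (omega (\<lambda>i. (1 / cnj c) * \<zeta> i) f)) z"
        using inner_e_f_nonzero by (simp add: c_def)
    qed
    then show "x \<in> {Lmap V (omega \<xi> f) | \<xi>. True}"
      by blast
  qed
qed

lemma adj_mem_G_f:
  assumes "x \<in> G_f V e f"
  shows "adj x \<in> G_f V e f"
proof -
  obtain \<xi> where "x = Lmap V (omega \<xi> f)"
    using assms G_f_eq_Lmap_omega_f by blast
  then show ?thesis
    unfolding mem_G_f using adj_Lmap_omega_in_Salg adj_Lmap_omega_e_fixed[OF f_fixed f_unit] by blast
qed

lemma G_f_eq_adj_Lmap_omega_f: "G_f V e f = {adj (Lmap V (omega \<xi> f)) | \<xi>. True}"
proof
  show "{adj (Lmap V (omega \<xi> f)) | \<xi>. True} \<subseteq> G_f V e f"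
    using adj_mem_G_f Lmap_omega_in_G_f[OF f_fixed] by blast
next
  show "G_f V e f \<subseteq> {adj (Lmap V (omega \<xi> f)) | \<xi>. True}"
  proof
    fix x assume "x \<in> G_f V e f"
    then obtain \<xi> where "adj x = Lmap V (omega \<xi> f)"
      using adj_mem_G_f G_f_eq_Lmap_omega_f by blast
    then have "x = adj (Lmap V (omega \<xi> f))"
      by (metis adj_adj)
    then show "x \<in> {adj (Lmap V (omega \<xi> f)) | \<xi>. True}"
      by blast
  qed
qed

lemma G_f_preserves_H_f:
  assumes "x \<in> G_f V e f" "app V (tensor_v b f) = tensor_v b f"
  shows "app V (tensor_v (app x b) f) = tensor_v (app x b) f"
proof -
  obtain \<xi> where "x = Lmap V (omega \<xi> f)"
    using assms(1) G_f_eq_Lmap_omega_f by blast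
  then show ?thesis
    using Lmap_omega_preserves_fixed[OF f_unit f_fixed assms(2)] by simp
qed

text \<open>\<open>\<rho>\<^sub>f\<close> is the orthogonal projection onto \<open>H\<^sub>f\<close>, which is invariant under \<open>G\<^sub>f\<close> and its adjoints.\<close>

lemma G_f_eq_commutant_rho_f: "G_f V e f = {x \<in> Salg V. comp_op x (rho_f V f) = comp_op (rho_f V f) x}"
proof
  have reduces: "comp_op (rho_f V f) (comp_op z (rho_f V f)) = comp_op z (rho_f V f)" if "z \<in> G_f V e f" for z
    using G_f_preserves_H_f[OF that rhomap_range_fixed[OF f_fixed f_unit]]
    by (intro op_eqI) (simp add: rho_f_def app_comp_op rhomap_fixes_if_fixed f_unit)
  show "G_f V e f \<subseteq> {x \<in> Salg V. comp_op x (rho_f V f) = comp_op (rho_f V f) x}"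
    using comp_op_commute_if_reducing[OF _ reduces reduces[OF adj_mem_G_f]] adj_rhomap_self[OF f_fixed f_unit]
    by (auto simp: mem_G_f rho_f_def)
next
  show "{x \<in> Salg V. comp_op x (rho_f V f) = comp_op (rho_f V f) x} \<subseteq> G_f V e f"
  proof (intro subsetI, elim CollectE conjE)
    fix x assume x: "x \<in> Salg V" and commute: "comp_op x (rho_f V f) = comp_op (rho_f V f) x"
    have "app (rho_f V f) e = e"
      by (simp add: rho_f_def rhomap_fixes_if_fixed f_unit e_fixed)
    then have "app (rho_f V f) (app x e) = app x e"
      using arg_cong[OF commute, of "\<lambda>A. app A e"] by (simp add: app_comp_op)
    then show "x \<in> G_f V e f"
      using x fixed_if_rhomap_fixes[OF f_unit] by (simp add: mem_G_f rho_f_def)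
  qed
qed

lemma G_f_eq_delta_fixed:
  "G_f V e f = {x \<in> Salg V. comp_op (delta V x) (tensor_op id_op (L_f V f)) = tensor_op x (L_f V f)}"
proof
  show "G_f V e f \<subseteq> {x \<in> Salg V. comp_op (delta V x) (tensor_op id_op (L_f V f)) = tensor_op x (L_f V f)}"
  proof (intro subsetI CollectI conjI)
    fix x assume x: "x \<in> G_f V e f"
    then show "x \<in> Salg V"
      by (simp add: mem_G_f)
    obtain \<eta> where x_eq: "x = Lmap V (omega cofixed_vec \<eta>)"
    and \<eta>_fixed: "app V (tensor_v \<eta> f) = tensor_v \<eta> f"
      using x by (rule G_f_elim)
    show "comp_op (delta V x) (tensor_op id_op (L_f V f)) = tensor_op x (L_f V f)"
    proof (rule op_eq_tensorI)
      fix a b :: "'i vec"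
      have "app V (tensor_v \<eta> (app (L_f V f) b)) = tensor_v \<eta> (app (L_f V f) b)"
        using fixed_pair_trans[OF \<eta>_fixed Lmap_range_fixed[OF f_fixed f_unit] f_nonzero] by (simp add: L_f_def)
      then show "app (comp_op (delta V x) (tensor_op id_op (L_f V f))) (tensor_v a b) = app (tensor_op x (L_f V f)) (tensor_v a b)"
        unfolding x_eq by (simp add: app_comp_op app_tensor_op delta_Lmap_omega_apply_fixed)
    qed
  qed
next
  show "{x \<in> Salg V. comp_op (delta V x) (tensor_op id_op (L_f V f)) = tensor_op x (L_f V f)} \<subseteq> G_f V e f"
  proof (intro subsetI, elim CollectE conjE)
    fix x assume x: "x \<in> Salg V" and eq: "comp_op (delta V x) (tensor_op id_op (L_f V f)) = tensor_op x (L_f V f)"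
    have "app (L_f V f) f = f"
      by (simp add: L_f_def Lmap_fixes_if_fixed f_unit f_fixed)
    then have "app V (tensor_v (app x e) f) = tensor_v (app x e) f"
      using arg_cong[OF eq, of "\<lambda>A. app A (tensor_v e f)"]
      by (simp add: app_comp_op app_tensor_op delta_def adj_fixes e_fixed)
    then show "x \<in> G_f V e f"
      using x by (simp add: mem_G_f)
  qed
qed

lemma star_subalgebra_G_f: "star_subalgebra (G_f V e f)"
  unfolding star_subalgebra_def
proof (intro conjI ballI allI)
  show "id_op \<in> G_f V e f"
    by (simp add: mem_G_f id_op_in_Salg e_fixed)
next
  fix x y assume "x \<in> G_f V e f" "y \<in> G_f V e f"
  then show "(\<lambda>i j. x i j + y i j) \<in> G_f V e f"
    by (simp add: mem_G_f Salg_add app_op_add tensor_v_add_left app_add)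
next
  fix c x assume "x \<in> G_f V e f"
  then show "(\<lambda>i j. c * x i j) \<in> G_f V e f"
    by (simp add: mem_G_f Salg_scale app_op_scale tensor_v_scale_left app_scale)
next
  fix x y assume x: "x \<in> G_f V e f" and y: "y \<in> G_f V e f"
  obtain \<eta> where x_eq: "x = Lmap V (omega cofixed_vec \<eta>)"
    and \<eta>_fixed: "app V (tensor_v \<eta> f) = tensor_v \<eta> f"
    using x by (rule G_f_elim)
  obtain \<xi> where y_eq: "y = Lmap V (omega \<xi> f)"
    using y G_f_eq_Lmap_omega_f by blast
  have "comp_op x y = Lmap V (omega (app (Lmap V (omega \<eta> cofixed_vec)) \<xi>) f)"
    unfolding x_eq y_eq by (rule Lmap_omega_comp[OF \<eta>_fixed])
  then show "comp_op x y \<in> G_f V e f"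
    using G_f_eq_Lmap_omega_f by blast
next
  fix x assume "x \<in> G_f V e f"
  then show "adj x \<in> G_f V e f"
    by (rule adj_mem_G_f)
qed

lemma delta_G_f_subset_alg_tensor: "delta V ` G_f V e f \<subseteq> alg_tensor (Salg V) (G_f V e f)"
proof
  fix T assume "T \<in> delta V ` G_f V e f"
  then obtain x where x: "x \<in> G_f V e f" and T: "T = delta V x"
    by blast
  obtain \<eta> where x_eq: "x = Lmap V (omega cofixed_vec \<eta>)"
    and \<eta>_fixed: "app V (tensor_v \<eta> f) = tensor_v \<eta> f"
    using x by (rule G_f_elim)
  have "(\<lambda>p q. \<Sum>m\<in>UNIV. tensor_op (Lmap V (omega cofixed_vec (basis_vec m)))
                                (Lmap V (omega (basis_vec m) \<eta>)) p q) \<in> alg_tensor (Salg V) (G_f V e f)"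
    by (intro sum_tensor_op_in_alg_tensor Lmap_omega_in_Salg Lmap_omega_in_G_f[OF \<eta>_fixed])
  then show "T \<in> alg_tensor (Salg V) (G_f V e f)"
    unfolding T x_eq delta_Lmap_omega .
qed

end

theorem proposition4p2:
  fixes V :: "('i::finite \<times> 'i) op" and e f :: "'i vec"
  assumes mu: "multiplicative_unitary V"
    and mult1: "\<forall>\<xi>. fixed_vec V \<xi> \<longleftrightarrow> (\<exists>c. \<xi> = (\<lambda>i. c * e i))"
    and e_unit: "inner_v e e = 1"
    and f: "pre_subgroup V e f"
  shows "G_f V e f = {adj (Lmap V (omega \<xi> f)) | \<xi>. True}
       \<and> G_f V e f = {x \<in> Salg V. comp_op x (rho_f V f) = comp_op (rho_f V f) x}
       \<and> G_f V e f = {x \<in> Salg V. comp_op (delta V x) (tensor_op id_op (L_f V f)) = tensor_op x (L_f V f)}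
       \<and> G_f V e f \<subseteq> Salg V
       \<and> star_subalgebra (G_f V e f)
       \<and> delta V ` G_f V e f \<subseteq> alg_tensor (Salg V) (G_f V e f)"
proof -
  interpret pre_subgroup_setting V e f
    by unfold_locales (fact mu mult1 e_unit f)+
  show ?thesis
    using G_f_eq_adj_Lmap_omega_f G_f_eq_commutant_rho_f G_f_eq_delta_fixed star_subalgebra_G_f
      delta_G_f_subset_alg_tensor
    by (auto simp: mem_G_f)
qed

end
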